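(* Fix $k\ge2$. Assume that the distribution of $Z$ is aperiodic (the greatest common divisor of its support is $1$), that $\mathbb{E} Z=\infty$, and that $\mathbb{E}\min_{1\le i\le k} Z^{(i)}<\infty$, where $Z^{(1)},\dots,Z^{(k)}$ are independent copies of $Z$. Then, in the $k$-choice model, $\Lambda_n\to\infty$ almost surely.
   Context: Let $Z$ be a random variable on $\mathbb{N}=\{1,2,3,\dots\}$. Fix $k\ge2$ and let $(Z^{(1)}_n)_{n\ge1},\dots,(Z^{(k)}_n)_{n\ge1}$ be $k$ independent sequences of i.i.d. random variables, all distributed as $Z$ and mutually independent. The $k$-choice model: define $T_n=\{n\}$ for $n\le0$ and $T_n=\{n\}\cup\bigcup_{i=1}^k T_{n-Z^{(i)}_n}$ for $n\ge1$. Let $\mathcal{L}_n=T_n\cap\{0,-1,-2,\dots\}$ and $\Lambda_n=|\mathcal{L}_n|$. *)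

theory Defs
  imports "HOL-Probability.Probability"
begin

text \<open>A sample z assigns to each choice index i and
each time n \<ge> 1 the jump z i n (the value of Z^(i)_n). This is exactly the unfolding of the
recursion T_n = {n} \<union> \<Union>_{i<k} T_{n - Z^(i)_n}, T_m = {m} for m \<le> 0.\<close>

inductive_set kchoice_tree :: "nat \<Rightarrow> (nat \<Rightarrow> nat \<Rightarrow> nat) \<Rightarrow> int \<Rightarrow> int set"
  for k :: nat and z :: "nat \<Rightarrow> nat \<Rightarrow> nat" and n :: int where
  root: "n \<in> kchoice_tree k z n"
| step: "\<lbrakk>m \<in> kchoice_tree k z n; m \<ge> 1; i < k\<rbrakk>
          \<Longrightarrow> m - int (z i (nat m)) \<in> kchoice_tree k z n"

definition kchoice_leaves :: "nat \<Rightarrow> (nat \<Rightarrow> nat \<Rightarrow> nat) \<Rightarrow> int \<Rightarrow> int set" where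
  "kchoice_leaves k z n = kchoice_tree k z n \<inter> {..0}"

definition kchoice_Lambda :: "nat \<Rightarrow> (nat \<Rightarrow> nat \<Rightarrow> nat) \<Rightarrow> int \<Rightarrow> nat" where
  "kchoice_Lambda k z n = card (kchoice_leaves k z n)"

end

theory Submission
  imports Defs
begin

text \<open>Follow from n the walk that always takes the shortest of the k jumps; it is a path in
  T_n. Since E min Z^(i) < \<infinity>, the probabilities P(min Z^(i) \<ge> s) are summable, so with high
  probability this walk has no long jumps: it meets any fixed window [a, a + L] of moderate
  length, and it visits [1, n] with bounded gaps except on a set of small weight.
  Since E Z = \<infinity>, the weights q_y = P(Z > y + R) have divergent sum, while exp of the sum of q_x
  over the walk, restricted to the event that no child of a walk point lands below -R, has
  expectation at most 1. Hence for large n the tree T_n has a leaf below -R with high probability.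

  By induction on N, P(\<Lambda>_n < N) \<rightarrow> 0: if \<Lambda> \<ge> N throughout a window met by the walk and all
  jumps below the window are at most R, then the leaves of the subtree at the meeting point lie
  in (-R, 0], and a leaf below -R is an extra one. Since \<Lambda> is monotone along T_n and with high
  probability the walk never jumps over the window, \<Lambda>_n \<ge> N eventually, almost surely.\<close>

lemma sets_PiM_count_space_nat:
  fixes K :: "'i set"
  assumes K: "finite K" and A: "A \<subseteq> space (PiM K (\<lambda>_. count_space (UNIV::nat set)))"
  shows "A \<in> sets (PiM K (\<lambda>_. count_space (UNIV::nat set)))"
proof -
  have space: "space (PiM K (\<lambda>_. count_space (UNIV::nat set))) = PiE K (\<lambda>_. UNIV)"
    by (simp add: space_PiM)
  have "countable (PiE K (\<lambda>_. UNIV::nat set))" using K by (intro countable_PiE) auto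
  then have "countable A" using A space by (auto intro: countable_subset)
  have "{r} \<in> sets (PiM K (\<lambda>_. count_space (UNIV::nat set)))" if "r \<in> A" for r
  proof -
    have "r \<in> PiE K (\<lambda>_. UNIV)" using that A space by auto
    then have "{r} = PiE K (\<lambda>j. {r j})"
      by (auto simp: PiE_iff extensional_def fun_eq_iff) metis
    then show ?thesis using K by (auto intro: sets_PiM_I_finite)
  qed
  then have "(\<Union>r\<in>A. {r}) \<in> sets (PiM K (\<lambda>_. count_space (UNIV::nat set)))"
    using \<open>countable A\<close> by (intro sets.countable_UN') auto
  then show ?thesis by simp
qed

lemma measurable_PiM_count_space_nat:
  fixes K :: "'i set" and F :: "('i \<Rightarrow> nat) \<Rightarrow> 'b"
  assumes "finite K" "\<And>r. F r \<in> space N"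
  shows "F \<in> measurable (PiM K (\<lambda>_. count_space (UNIV::nat set))) N"
  using assms by (intro measurableI sets_PiM_count_space_nat) auto

lemma nn_integral_of_nat_eq_suminf:
  assumes X: "X \<in> measurable N (count_space UNIV)"
  shows "(\<integral>\<^sup>+ \<omega>. ennreal (real (X \<omega> :: nat)) \<partial>N) = (\<Sum>d. emeasure N {\<omega>\<in>space N. Suc d \<le> X \<omega>})"
proof -
  have of_nat_eq: "ennreal (real x) = (\<Sum>d. indicator {Suc d..} x)" for x :: nat
  proof -
    have "(\<Sum>d. indicator {Suc d..} x :: ennreal) = (\<Sum>d<x. indicator {Suc d..} x)"
      by (rule suminf_finite) (auto simp: indicator_def)
    also have "\<dots> = ennreal (real x)"
      by (simp add: indicator_def ennreal_of_nat_eq_real_of_nat)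
    finally show ?thesis by simp
  qed
  have "(\<integral>\<^sup>+ \<omega>. ennreal (real (X \<omega>)) \<partial>N) = (\<Sum>d. \<integral>\<^sup>+ \<omega>. indicator {Suc d..} (X \<omega>) \<partial>N)"
    unfolding of_nat_eq by (intro nn_integral_suminf measurable_compose[OF X]) auto
  also have "\<dots> = (\<Sum>d. emeasure N {\<omega>\<in>space N. Suc d \<le> X \<omega>})"
  proof (intro suminf_cong)
    fix d
    have "(\<integral>\<^sup>+ \<omega>. indicator {Suc d..} (X \<omega>) \<partial>N) = (\<integral>\<^sup>+ \<omega>. indicator {\<omega>\<in>space N. Suc d \<le> X \<omega>} \<omega> \<partial>N)"
      by (intro nn_integral_cong) (auto simp: indicator_def)
    also have "\<dots> = emeasure N {\<omega>\<in>space N. Suc d \<le> X \<omega>}"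
      using X by (intro nn_integral_indicator) measurable
    finally show "(\<integral>\<^sup>+ \<omega>. indicator {Suc d..} (X \<omega>) \<partial>N) = emeasure N {\<omega>\<in>space N. Suc d \<le> X \<omega>}" .
  qed
  finally show ?thesis .
qed

lemma sum_le_suminf_shift:
  fixes f :: "nat \<Rightarrow> real"
  assumes "summable f" "\<And>n. 0 \<le> f n" "finite S" "S \<subseteq> {N..}"
  shows "sum f S \<le> (\<Sum>j. f (j + N))"
proof -
  have "inj_on (\<lambda>x. x - N) S"
    using assms(4) by (intro inj_onI) (metis atLeast_iff le_add_diff_inverse subsetD)
  then have "sum f S = (\<Sum>j\<in>(\<lambda>x. x - N) ` S. f (j + N))"
    using assms(4) by (subst sum.reindex) (auto intro!: sum.cong)
  also have "\<dots> \<le> (\<Sum>j. f (j + N))"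
    using assms by (intro sum_le_suminf summable_ignore_initial_segment) auto
  finally show ?thesis .
qed

lemma (in prob_space) measure_le_if_AE_imp:
  assumes "AE \<omega> in M. P \<omega>" "B \<in> sets M" "\<And>\<omega>. \<omega> \<in> space M \<Longrightarrow> Q \<omega> \<Longrightarrow> P \<omega> \<Longrightarrow> \<omega> \<in> B"
  shows "prob {\<omega>\<in>space M. Q \<omega>} \<le> prob B"
proof -
  have "emeasure M {\<omega>\<in>space M. Q \<omega>} \<le> emeasure M B"
    using assms(1) by (intro emeasure_mono_AE[OF _ assms(2)]) (auto elim!: AE_mp intro: assms(3))
  then show ?thesis by (simp add: emeasure_eq_measure assms(2))
qed

lemma (in prob_space) AE_if_small_exceptional_sets:
  assumes Q: "AE \<omega> in M. Q \<omega>"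
    and small: "\<And>e. 0 < e \<Longrightarrow> \<exists>B\<in>sets M. prob B \<le> e \<and> (\<forall>\<omega>\<in>space M. Q \<omega> \<longrightarrow> \<omega> \<notin> B \<longrightarrow> P \<omega>)"
  shows "AE \<omega> in M. P \<omega>"
proof -
  obtain B where B: "\<And>j. B j \<in> sets M" "\<And>j. prob (B j) \<le> 1 / real (Suc j)"
    "\<And>j \<omega>. \<omega> \<in> space M \<Longrightarrow> Q \<omega> \<Longrightarrow> \<omega> \<notin> B j \<Longrightarrow> P \<omega>"
    using small[of "1 / real (Suc _)"] by (simp add: Bex_def) metis
  have "prob (\<Inter>j. B j) \<le> 1 / real (Suc j)" for j
    using B(1,2)[of j] by (meson INF_lower UNIV_I finite_measure_mono order_trans sets.countable_INT')
  then have "prob (\<Inter>j. B j) \<le> 0"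
    by (intro LIMSEQ_le_const[OF LIMSEQ_Suc[OF lim_inverse_n]]) (auto simp: inverse_eq_divide)
  then have "emeasure M (\<Inter>j. B j) = 0"
    using B(1) by (simp add: emeasure_eq_measure measure_nonneg antisym)
  then have "AE \<omega> in M. \<omega> \<notin> (\<Inter>j. B j)" using B(1) by (intro AE_I'[of "\<Inter>j. B j"]) auto
  then show ?thesis using AE_space Q
    by eventually_elim (use B(3) in blast)
qed

lemma LIMSEQ_0_if_eventually_le:
  fixes f :: "nat \<Rightarrow> real"
  assumes "\<And>n. 0 \<le> f n" "\<And>e. 0 < e \<Longrightarrow> \<exists>N. \<forall>n\<ge>N. f n \<le> e"
  shows "f \<longlonglongrightarrow> 0"
proof (rule LIMSEQ_I)
  fix r :: real assume "0 < r"
  then obtain N where "\<forall>n\<ge>N. f n \<le> r / 2" using assms(2)[of "r / 2"] by auto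
  then show "\<exists>N. \<forall>n\<ge>N. norm (f n - 0) < r" using assms(1) \<open>0 < r\<close> by (intro exI[of _ N]) force
qed

section \<open>The tree and the walk along minimal jumps\<close>

definition min_jump :: "nat \<Rightarrow> (nat \<Rightarrow> nat \<Rightarrow> nat) \<Rightarrow> nat \<Rightarrow> nat" where
  "min_jump k z y = Min ((\<lambda>i. z i y) ` {..<k})"

lemma min_jump_attained: "0 < k \<Longrightarrow> \<exists>i<k. z i y = min_jump k z y"
proof -
  assume "0 < k"
  then have "Min ((\<lambda>i. z i y) ` {..<k}) \<in> (\<lambda>i. z i y) ` {..<k}"
    by (intro Min_in) auto
  then show ?thesis unfolding min_jump_def by auto
qed

lemma le_min_jump_iff: "0 < k \<Longrightarrow> s \<le> min_jump k z y \<longleftrightarrow> (\<forall>i<k. s \<le> z i y)"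
  unfolding min_jump_def by (subst Min_ge_iff) auto

lemma min_jump_cong: "(\<And>i. i < k \<Longrightarrow> z i y = z' i y) \<Longrightarrow> min_jump k z y = min_jump k z' y"
  unfolding min_jump_def by (auto intro!: arg_cong[where f=Min] image_cong)

lemma kchoice_tree_le: "x \<in> kchoice_tree k z n \<Longrightarrow> x \<le> n"
  by (induction rule: kchoice_tree.induct) auto

lemma kchoice_tree_trans:
  assumes "m \<in> kchoice_tree k z n"
  shows "kchoice_tree k z m \<subseteq> kchoice_tree k z n"
proof
  fix x assume "x \<in> kchoice_tree k z m"
  then show "x \<in> kchoice_tree k z n"
    by (induction rule: kchoice_tree.induct) (auto intro: kchoice_tree.step assms)
qed

lemma finite_kchoice_tree: "finite (kchoice_tree k z n)"
proof (rule finite_subset)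
  show "kchoice_tree k z n \<subseteq> insert n ((\<lambda>(m, i). m - int (z i (nat m))) ` ({1..n} \<times> {..<k}))"
  proof
    fix x assume "x \<in> kchoice_tree k z n"
    then show "x \<in> insert n ((\<lambda>(m, i). m - int (z i (nat m))) ` ({1..n} \<times> {..<k}))"
    proof (induction rule: kchoice_tree.induct)
      case (step m i)
      then show ?case using kchoice_tree_le[OF step(1)] by (auto intro!: image_eqI[where x="(m, i)"])
    qed simp
  qed
qed simp

lemma finite_kchoice_leaves: "finite (kchoice_leaves k z n)"
  unfolding kchoice_leaves_def using finite_kchoice_tree by auto

lemma kchoice_leaves_mono:
  "m \<in> kchoice_tree k z n \<Longrightarrow> kchoice_leaves k z m \<subseteq> kchoice_leaves k z n"
  unfolding kchoice_leaves_def using kchoice_tree_trans by blast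

lemma kchoice_Lambda_mono:
  "m \<in> kchoice_tree k z n \<Longrightarrow> kchoice_Lambda k z m \<le> kchoice_Lambda k z n"
  unfolding kchoice_Lambda_def by (intro card_mono finite_kchoice_leaves kchoice_leaves_mono)

lemma kchoice_tree_ge_if_jumps_le:
  assumes "\<And>i y. i < k \<Longrightarrow> 1 \<le> y \<Longrightarrow> int y \<le> n \<Longrightarrow> z i y \<le> R" and "1 \<le> n"
    and "x \<in> kchoice_tree k z n"
  shows "1 - int R \<le> x"
  using assms(3)
proof (induction rule: kchoice_tree.induct)
  case (step m i)
  then have "z i (nat m) \<le> R" using assms(1)[of i "nat m"] kchoice_tree_le[OF step(1)] by auto
  then show ?case using step by simp
qed (use assms(2) in simp)

lemma kchoice_tree_cong:
  assumes "\<And>i y. i < k \<Longrightarrow> 1 \<le> y \<Longrightarrow> int y \<le> n \<Longrightarrow> z i y = z' i y"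
  shows "kchoice_tree k z n = kchoice_tree k z' n"
proof -
  have "kchoice_tree k z n \<subseteq> kchoice_tree k z' n"
    if agree: "\<And>i y. i < k \<Longrightarrow> 1 \<le> y \<Longrightarrow> int y \<le> n \<Longrightarrow> z i y = z' i y" for z z'
  proof
    fix x assume "x \<in> kchoice_tree k z n"
    then show "x \<in> kchoice_tree k z' n"
    proof (induction rule: kchoice_tree.induct)
      case (step m i)
      then have "z i (nat m) = z' i (nat m)" using agree[of i "nat m"] kchoice_tree_le[OF step(1)] by auto
      then show ?case using kchoice_tree.step[OF step(4) step(2,3)] by simp
    qed (rule kchoice_tree.root)
  qed
  then show ?thesis using assms by (metis subset_antisym)
qed

inductive_set min_walk :: "nat \<Rightarrow> (nat \<Rightarrow> nat \<Rightarrow> nat) \<Rightarrow> int \<Rightarrow> int set"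
  for k :: nat and z :: "nat \<Rightarrow> nat \<Rightarrow> nat" and n :: int where
  start: "n \<in> min_walk k z n"
| step: "\<lbrakk>x \<in> min_walk k z n; 1 \<le> x\<rbrakk> \<Longrightarrow> x - int (min_jump k z (nat x)) \<in> min_walk k z n"

lemma min_walk_le: "x \<in> min_walk k z n \<Longrightarrow> x \<le> n"
  by (induction rule: min_walk.induct) auto

lemma min_walk_subset_kchoice_tree:
  assumes k: "0 < k"
  shows "min_walk k z n \<subseteq> kchoice_tree k z n"
proof
  fix x assume "x \<in> min_walk k z n"
  then show "x \<in> kchoice_tree k z n"
  proof (induction rule: min_walk.induct)
    case (step x)
    obtain i where "i < k" "z i (nat x) = min_jump k z (nat x)" using min_jump_attained[OF k] by blast
    then show ?case using kchoice_tree.step[OF step(3) step(2)] by metis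
  qed (rule kchoice_tree.root)
qed

lemma min_walk_trans:
  assumes "m \<in> min_walk k z n"
  shows "min_walk k z m \<subseteq> min_walk k z n"
proof
  fix x assume "x \<in> min_walk k z m"
  then show "x \<in> min_walk k z n"
    by (induction rule: min_walk.induct) (auto intro: min_walk.step assms)
qed

lemma min_walk_unfold:
  assumes "1 \<le> n"
  shows "min_walk k z n = insert n (min_walk k z (n - int (min_jump k z (nat n))))"
proof
  show "insert n (min_walk k z (n - int (min_jump k z (nat n)))) \<subseteq> min_walk k z n"
    using min_walk_trans[OF min_walk.step[OF min_walk.start assms]] min_walk.start by auto
  show "min_walk k z n \<subseteq> insert n (min_walk k z (n - int (min_jump k z (nat n))))"
  proof
    fix x assume "x \<in> min_walk k z n"
    then show "x \<in> insert n (min_walk k z (n - int (min_jump k z (nat n))))"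
      by (induction rule: min_walk.induct) (auto intro: min_walk.intros)
  qed
qed

lemma min_walk_nonpos: "n \<le> 0 \<Longrightarrow> min_walk k z n = {n}"
proof -
  assume "n \<le> 0"
  have "x = n" if "x \<in> min_walk k z n" for x
    using that by (induction rule: min_walk.induct) (use \<open>n \<le> 0\<close> min_walk_le in auto)
  then show ?thesis using min_walk.start by auto
qed

lemma min_walk_cong:
  assumes "\<And>i y. i < k \<Longrightarrow> 1 \<le> y \<Longrightarrow> int y \<le> n \<Longrightarrow> z i y = z' i y"
  shows "min_walk k z n = min_walk k z' n"
proof -
  have "min_walk k z n \<subseteq> min_walk k z' n"
    if agree: "\<And>i y. i < k \<Longrightarrow> 1 \<le> y \<Longrightarrow> int y \<le> n \<Longrightarrow> z i y = z' i y" for z z'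
  proof
    fix x assume "x \<in> min_walk k z n"
    then show "x \<in> min_walk k z' n"
    proof (induction rule: min_walk.induct)
      case (step x)
      then have "min_jump k z (nat x) = min_jump k z' (nat x)"
        using agree min_walk_le[OF step(1)] by (intro min_jump_cong) auto
      then show ?case using min_walk.step[OF step(3) step(2)] by simp
    qed (rule min_walk.start)
  qed
  then show ?thesis using assms by (metis subset_antisym)
qed

lemma min_walk_hits_window:
  assumes k: "0 < k" and a: "1 \<le> a" and n: "a \<le> n"
    and lands: "\<And>y::nat. a + L < int y \<Longrightarrow> int y \<le> n \<Longrightarrow>
                  1 \<le> min_jump k z y \<and> a \<le> int y - int (min_jump k z y)"
  shows "\<exists>x\<in>min_walk k z n. a \<le> x \<and> x \<le> a + L"
  using n lands
proof (induction "nat (n - a)" arbitrary: n rule: less_induct)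
  case less
  show ?case
  proof (cases "n \<le> a + L")
    case True
    then show ?thesis using less.prems min_walk.start by blast
  next
    case False
    define c where "c = n - int (min_jump k z (nat n))"
    have "a \<le> c" "c < n"
      using less.prems(2)[of "nat n"] False a less.prems(1) unfolding c_def by auto
    then have "\<exists>x\<in>min_walk k z c. a \<le> x \<and> x \<le> a + L"
      using less.prems by (intro less.hyps) auto
    moreover have "min_walk k z c \<subseteq> min_walk k z n"
      unfolding c_def using a less.prems(1) by (intro min_walk_trans min_walk.step min_walk.start) auto
    ultimately show ?thesis by blast
  qed
qed

definition walk_points :: "nat \<Rightarrow> (nat \<Rightarrow> nat \<Rightarrow> nat) \<Rightarrow> int \<Rightarrow> int set" where
  "walk_points k z n = {x \<in> min_walk k z n. 1 \<le> x}"

definition walk_weight :: "nat \<Rightarrow> (nat \<Rightarrow> nat \<Rightarrow> nat) \<Rightarrow> (nat \<Rightarrow> real) \<Rightarrow> int \<Rightarrow> real" where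
  "walk_weight k z f n = (\<Sum>x\<in>walk_points k z n. f (nat x))"

definition walk_jumps_bounded :: "nat \<Rightarrow> (nat \<Rightarrow> nat \<Rightarrow> nat) \<Rightarrow> nat \<Rightarrow> int \<Rightarrow> bool" where
  "walk_jumps_bounded k z R n = (\<forall>x\<in>walk_points k z n. \<forall>i<k. z i (nat x) \<le> nat x + R)"

lemma finite_walk_points: "0 < k \<Longrightarrow> finite (walk_points k z n)"
  unfolding walk_points_def
  using finite_subset[OF min_walk_subset_kchoice_tree finite_kchoice_tree] by auto

lemma walk_points_nonpos: "n \<le> 0 \<Longrightarrow> walk_points k z n = {}"
  unfolding walk_points_def using min_walk_nonpos by auto

lemma walk_points_unfold:
  assumes "1 \<le> n" "1 \<le> min_jump k z (nat n)"
  shows "walk_points k z n = insert n (walk_points k z (n - int (min_jump k z (nat n))))"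
    and "n \<notin> walk_points k z (n - int (min_jump k z (nat n)))"
  using min_walk_unfold[OF assms(1), of k z] assms
    min_walk_le[of n k z "n - int (min_jump k z (nat n))"]
  unfolding walk_points_def by auto

lemma walk_points_cong:
  "(\<And>i y. i < k \<Longrightarrow> 1 \<le> y \<Longrightarrow> int y \<le> n \<Longrightarrow> z i y = z' i y) \<Longrightarrow> walk_points k z n = walk_points k z' n"
  unfolding walk_points_def using min_walk_cong by metis

lemma walk_weight_unfold:
  assumes "0 < k" "1 \<le> n" "1 \<le> min_jump k z (nat n)"
  shows "walk_weight k z f n = f (nat n) + walk_weight k z f (n - int (min_jump k z (nat n)))"
  unfolding walk_weight_def walk_points_unfold(1)[OF assms(2,3)]
  using walk_points_unfold(2)[OF assms(2,3)] finite_walk_points[OF assms(1)] by simp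

lemma walk_jumps_bounded_unfold:
  assumes "1 \<le> n"
  shows "walk_jumps_bounded k z R n \<longleftrightarrow>
    (\<forall>i<k. z i (nat n) \<le> nat n + R) \<and> walk_jumps_bounded k z R (n - int (min_jump k z (nat n)))"
  unfolding walk_jumps_bounded_def walk_points_def min_walk_unfold[OF assms] using assms by auto

lemma walk_jumps_bounded_if_leaves_ge:
  assumes k: "0 < k" and leaves: "\<And>l. l \<in> kchoice_leaves k z n \<Longrightarrow> - int R \<le> l"
  shows "walk_jumps_bounded k z R n"
  unfolding walk_jumps_bounded_def
proof (intro ballI allI impI)
  fix x i assume x: "x \<in> walk_points k z n" and i: "i < k"
  then have "x \<in> kchoice_tree k z n" "1 \<le> x"
    using min_walk_subset_kchoice_tree[OF k] unfolding walk_points_def by auto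
  then have "x - int (z i (nat x)) \<in> kchoice_tree k z n"
    using i by (rule kchoice_tree.step)
  then have "x - int (z i (nat x)) \<le> 0 \<Longrightarrow> - int R \<le> x - int (z i (nat x))"
    using leaves unfolding kchoice_leaves_def by auto
  then show "z i (nat x) \<le> nat x + R" using \<open>1 \<le> x\<close> by linarith
qed

definition walk_exp_weight ::
    "nat \<Rightarrow> (nat \<Rightarrow> real) \<Rightarrow> nat \<Rightarrow> int \<Rightarrow> (nat \<Rightarrow> nat \<Rightarrow> nat) \<Rightarrow> ennreal" where
  "walk_exp_weight k f R n z =
    (if walk_jumps_bounded k z R n then ennreal (exp (walk_weight k z f n)) else 0)"

lemma walk_exp_weight_nonpos: "n \<le> 0 \<Longrightarrow> walk_exp_weight k f R n z = 1"
  unfolding walk_exp_weight_def walk_jumps_bounded_def walk_weight_def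
  by (simp add: walk_points_nonpos)

lemma walk_exp_weight_unfold:
  assumes "0 < k" "1 \<le> n" "1 \<le> min_jump k z (nat n)"
  shows "walk_exp_weight k f R n z =
    (if \<forall>i<k. z i (nat n) \<le> nat n + R then ennreal (exp (f (nat n))) else 0) *
    walk_exp_weight k f R (n - int (min_jump k z (nat n))) z"
  unfolding walk_exp_weight_def walk_jumps_bounded_unfold[OF assms(2)] walk_weight_unfold[OF assms]
  by (simp add: exp_add ennreal_mult)

text \<open>From some point x \<ge> y the minimal jump clears the whole block (y - G, y].\<close>

definition jump_across :: "nat \<Rightarrow> nat \<Rightarrow> nat \<Rightarrow> nat \<Rightarrow> (nat \<Rightarrow> nat \<Rightarrow> nat) \<Rightarrow> bool" where
  "jump_across k G m y z = (\<exists>x. y \<le> x \<and> x \<le> m \<and> x - y + G \<le> min_jump k z x)"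

definition jump_across_weight ::
    "nat \<Rightarrow> (nat \<Rightarrow> real) \<Rightarrow> nat \<Rightarrow> nat \<Rightarrow> (nat \<Rightarrow> nat \<Rightarrow> nat) \<Rightarrow> real" where
  "jump_across_weight k f G m z = (\<Sum>y\<in>{1..m}. f y * (if jump_across k G m y z then 1 else 0))"

definition exit_above :: "nat \<Rightarrow> nat \<Rightarrow> nat \<Rightarrow> (nat \<Rightarrow> nat \<Rightarrow> nat) \<Rightarrow> bool" where
  "exit_above k Y m z = (\<exists>x. Y < x \<and> x \<le> m \<and> x \<le> min_jump k z x)"

definition positive_jumps_upto :: "nat \<Rightarrow> nat \<Rightarrow> (nat \<Rightarrow> nat \<Rightarrow> nat) \<Rightarrow> bool" where
  "positive_jumps_upto k m z = (\<forall>i<k. \<forall>y. 1 \<le> y \<and> y \<le> m \<longrightarrow> 1 \<le> z i y)"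

lemma walk_point_near_or_jump_across:
  assumes k: "0 < k" and pos: "positive_jumps_upto k m z" and no_exit: "\<not> exit_above k Y m z"
    and y: "Y < y" "y \<le> m"
  shows "(\<exists>v\<in>walk_points k z (int m). nat v \<le> y \<and> y < nat v + G) \<or> jump_across k G m y z"
proof -
  define S where "S = {v\<in>walk_points k z (int m). int y \<le> v}"
  have "int m \<in> S" unfolding S_def walk_points_def using y min_walk.start by auto
  have "finite S" unfolding S_def using finite_walk_points[OF k] by auto
  define x where "x = Min S"
  have xS: "x \<in> S" and x_least: "\<And>v. v \<in> S \<Longrightarrow> x \<le> v"
    unfolding x_def using \<open>finite S\<close> \<open>int m \<in> S\<close> by (auto intro: Min_in)
  have x_walk: "x \<in> min_walk k z (int m)" and "1 \<le> x" "int y \<le> x"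
    using xS unfolding S_def walk_points_def by auto
  obtain xn where xn: "x = int xn" using \<open>1 \<le> x\<close> by (metis nonneg_int_cases order_trans zero_le_one)
  have "xn \<le> m" using min_walk_le[OF x_walk] xn by simp
  have jump_pos: "1 \<le> min_jump k z xn"
    using pos \<open>1 \<le> x\<close> \<open>xn \<le> m\<close> xn unfolding positive_jumps_upto_def le_min_jump_iff[OF k] by auto
  have "min_jump k z xn < xn"
    using no_exit \<open>xn \<le> m\<close> \<open>int y \<le> x\<close> xn y unfolding exit_above_def by force
  define c where "c = x - int (min_jump k z xn)"
  have c: "c \<in> walk_points k z (int m)"
    unfolding c_def walk_points_def using min_walk.step[OF x_walk \<open>1 \<le> x\<close>] xn \<open>min_jump k z xn < xn\<close>
    by auto
  have "c < int y"
    using x_least[of c] c jump_pos unfolding S_def c_def by force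
  show ?thesis
  proof (cases "int y < c + int G")
    case True
    then show ?thesis using c \<open>c < int y\<close> unfolding walk_points_def by (intro disjI1 bexI[of _ c]) auto
  next
    case False
    then show ?thesis
      unfolding jump_across_def c_def using xn \<open>int y \<le> x\<close> \<open>xn \<le> m\<close>
      by (intro disjI2 exI[of _ xn]) auto
  qed
qed

lemma sum_covering_windows_le:
  fixes w :: "'a \<Rightarrow> real" and pos :: "'a \<Rightarrow> nat"
  assumes "finite V" "\<And>v. 0 \<le> w v"
  shows "(\<Sum>y\<in>{1..m}. \<Sum>v\<in>V. if pos v \<le> y \<and> y < pos v + G then w v else 0) \<le> real G * (\<Sum>v\<in>V. w v)"
proof -
  have "(\<Sum>y\<in>{1..m}. if pos v \<le> y \<and> y < pos v + G then w v else 0) \<le> real G * w v" for v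
  proof -
    have "(\<Sum>y\<in>{1..m}. if pos v \<le> y \<and> y < pos v + G then w v else 0)
        = real (card {y\<in>{1..m}. pos v \<le> y \<and> y < pos v + G}) * w v"
      by (simp add: sum.inter_filter[symmetric])
    also have "\<dots> \<le> real G * w v"
    proof -
      have "card {y\<in>{1..m}. pos v \<le> y \<and> y < pos v + G} \<le> card {pos v..<pos v + G}"
        by (intro card_mono) auto
      then show ?thesis using assms(2)[of v] by (intro mult_right_mono) auto
    qed
    finally show ?thesis .
  qed
  then have "(\<Sum>v\<in>V. \<Sum>y\<in>{1..m}. if pos v \<le> y \<and> y < pos v + G then w v else 0) \<le> (\<Sum>v\<in>V. real G * w v)"
    by (intro sum_mono)
  then show ?thesis by (subst sum.swap) (simp add: sum_distrib_left)
qed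

text \<open>Every y in (Y, m] lies within distance G above some point of the walk, unless a minimal jump
  clears a block of length G at y. Summing the antitone weights f over [1, m] accordingly:\<close>

lemma sum_le_walk_weight:
  fixes f :: "nat \<Rightarrow> real"
  assumes k: "0 < k" and f: "antimono f" "\<And>y. 0 \<le> f y"
    and pos: "positive_jumps_upto k m z" and no_exit: "\<not> exit_above k Y m z"
  shows "(\<Sum>y\<in>{1..m}. f y) \<le>
    (\<Sum>y\<in>{1..Y}. f y) + real G * walk_weight k z f (int m) + jump_across_weight k f G m z"
proof -
  let ?V = "walk_points k z (int m)"
  let ?B = "\<lambda>y. if jump_across k G m y z then 1 else 0 :: real"
  let ?C = "\<lambda>y. \<Sum>v\<in>?V. if nat v \<le> y \<and> y < nat v + G then f (nat v) else 0"
  have C_nonneg: "0 \<le> ?C y" for y by (intro sum_nonneg) (auto simp: f)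
  have B_nonneg: "0 \<le> f y * ?B y" for y using f by auto
  have "f y \<le> (if y \<le> Y then f y else 0) + ?C y + f y * ?B y" if y: "y \<in> {1..m}" for y
  proof (cases "y \<le> Y")
    case True
    then show ?thesis using C_nonneg B_nonneg by simp
  next
    case False
    then consider v where "v \<in> ?V" "nat v \<le> y" "y < nat v + G" | "jump_across k G m y z"
      using walk_point_near_or_jump_across[OF k pos no_exit, of y G] y by auto
    then show ?thesis
    proof cases
      case 1
      then have "f y \<le> f (nat v)" using f(1) by (auto simp: antimono_def)
      also have "\<dots> \<le> ?C y"
        using member_le_sum[OF 1(1), of "\<lambda>v. if nat v \<le> y \<and> y < nat v + G then f (nat v) else 0"] 1
          finite_walk_points[OF k] f(2) by simp
      finally show ?thesis using B_nonneg[of y] False by simp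
    next
      case 2
      then show ?thesis using C_nonneg False by simp
    qed
  qed
  then have "(\<Sum>y\<in>{1..m}. f y) \<le> (\<Sum>y\<in>{1..m}. (if y \<le> Y then f y else 0) + ?C y + f y * ?B y)"
    by (intro sum_mono)
  also have "\<dots> = (\<Sum>y\<in>{1..m}. if y \<le> Y then f y else 0) + (\<Sum>y\<in>{1..m}. ?C y) + jump_across_weight k f G m z"
    by (simp add: sum.distrib jump_across_weight_def)
  also have "(\<Sum>y\<in>{1..m}. if y \<le> Y then f y else 0) \<le> (\<Sum>y\<in>{1..Y}. f y)"
    by (auto simp: sum.inter_filter[symmetric] f intro!: sum_mono2)
  also have "(\<Sum>y\<in>{1..m}. ?C y) \<le> real G * walk_weight k z f (int m)"
    unfolding walk_weight_def by (rule sum_covering_windows_le[OF finite_walk_points[OF k] f(2)])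
  finally show ?thesis by simp
qed

definition jump_over_window :: "nat \<Rightarrow> nat \<Rightarrow> nat \<Rightarrow> nat \<Rightarrow> (nat \<Rightarrow> nat \<Rightarrow> nat) \<Rightarrow> bool" where
  "jump_over_window k a L m z = (\<exists>y. a + L < y \<and> y \<le> m \<and> y - a + 1 \<le> min_jump k z y)"

definition large_jump_upto :: "nat \<Rightarrow> nat \<Rightarrow> nat \<Rightarrow> (nat \<Rightarrow> nat \<Rightarrow> nat) \<Rightarrow> bool" where
  "large_jump_upto k R n z = (\<exists>i<k. \<exists>y. 1 \<le> y \<and> y \<le> n \<and> R < z i y)"

lemma kchoice_tree_meets_window:
  assumes k: "0 < k" and a: "1 \<le> a" "a \<le> m" and pos: "positive_jumps_upto k m z"
    and no_jump: "\<not> jump_over_window k a L m z"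
  shows "\<exists>x. a \<le> x \<and> x \<le> a + L \<and> int x \<in> kchoice_tree k z (int m)"
proof -
  have "\<exists>x\<in>min_walk k z (int m). int a \<le> x \<and> x \<le> int a + int L"
  proof (rule min_walk_hits_window[OF k])
    fix y :: nat assume y: "int a + int L < int y" "int y \<le> int m"
    have "1 \<le> min_jump k z y"
      using pos y a unfolding positive_jumps_upto_def le_min_jump_iff[OF k] by auto
    moreover have "\<not> y - a + 1 \<le> min_jump k z y" using no_jump y unfolding jump_over_window_def by auto
    ultimately show "1 \<le> min_jump k z y \<and> int a \<le> int y - int (min_jump k z y)" using y by auto
  qed (use a in auto)
  then obtain x where "x \<in> min_walk k z (int m)" "int a \<le> x" "x \<le> int a + int L" by blast
  then show ?thesis using min_walk_subset_kchoice_tree[OF k] by (intro exI[of _ "nat x"]) auto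
qed

lemma kchoice_Lambda_ge_beyond_window:
  assumes k: "0 < k" and a: "1 \<le> a" "a \<le> m" and pos: "positive_jumps_upto k m z"
    and no_jump: "\<not> jump_over_window k a L m z"
    and window: "\<forall>x\<in>{a..a+L}. N \<le> kchoice_Lambda k z (int x)"
  shows "N \<le> kchoice_Lambda k z (int m)"
  using kchoice_tree_meets_window[OF k a pos no_jump] window kchoice_Lambda_mono
  by (meson atLeastAtMost_iff order_trans)

text \<open>Below the window all jumps are at most R, so the subtree of a window point has its leaves
  in (-R, 0]; a leaf below -R of the big tree is therefore an extra one.\<close>

lemma Suc_le_kchoice_Lambda:
  assumes k: "0 < k" and a: "1 \<le> a" "a \<le> m" and pos: "positive_jumps_upto k m z"
    and no_jump: "\<not> jump_over_window k a L m z"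
    and window: "\<forall>x\<in>{a..a+L}. N \<le> kchoice_Lambda k z (int x)"
    and small_jumps: "\<not> large_jump_upto k R (a + L) z"
    and deep_leaf: "l \<in> kchoice_leaves k z (int m)" "l < - int R"
  shows "Suc N \<le> kchoice_Lambda k z (int m)"
proof -
  obtain x where x: "a \<le> x" "x \<le> a + L" "int x \<in> kchoice_tree k z (int m)"
    using kchoice_tree_meets_window[OF k a pos no_jump] by blast
  have "1 - int R \<le> w" if "w \<in> kchoice_tree k z (int x)" for w
  proof (rule kchoice_tree_ge_if_jumps_le[OF _ _ that])
    fix i y assume "i < k" "1 \<le> y" "int y \<le> int x"
    then show "z i y \<le> R"
      using small_jumps x(2) unfolding large_jump_upto_def by (metis le_trans not_le of_nat_le_iff)
  qed (use x a in auto)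
  then have "l \<notin> kchoice_leaves k z (int x)"
    using deep_leaf(2) unfolding kchoice_leaves_def by force
  then have "Suc (kchoice_Lambda k z (int x)) = card (insert l (kchoice_leaves k z (int x)))"
    using finite_kchoice_leaves by (simp add: kchoice_Lambda_def)
  also have "\<dots> \<le> kchoice_Lambda k z (int m)"
    unfolding kchoice_Lambda_def using kchoice_leaves_mono[OF x(3)] deep_leaf(1)
    by (intro card_mono finite_kchoice_leaves) auto
  finally show ?thesis using window x by (meson Suc_le_mono atLeastAtMost_iff le_trans)
qed

section \<open>The probabilistic model\<close>

locale kchoice_model = prob_space M for M :: "'a measure" +
  fixes k :: nat and p :: "nat pmf" and Zs :: "nat \<Rightarrow> nat \<Rightarrow> 'a \<Rightarrow> nat"
  assumes k_pos: "0 < k" and zero_notin_pmf: "0 \<notin> set_pmf p"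
    and indep_Zs: "indep_vars (\<lambda>_. count_space UNIV) (\<lambda>(i, n). Zs i n) ({..<k} \<times> {1..})"
    and distr_Zs: "\<And>i n. i < k \<Longrightarrow> 1 \<le> n \<Longrightarrow> distr M (count_space UNIV) (Zs i n) = measure_pmf p"
begin

definition jumps :: "'a \<Rightarrow> nat \<Rightarrow> nat \<Rightarrow> nat" where "jumps \<omega> = (\<lambda>i n. Zs i n \<omega>)"

definition depends_on :: "nat set \<Rightarrow> ((nat \<Rightarrow> nat \<Rightarrow> nat) \<Rightarrow> 'b) \<Rightarrow> bool" where
  "depends_on A F \<longleftrightarrow> (\<forall>z z'. (\<forall>i<k. \<forall>n\<in>A. z i n = z' i n) \<longrightarrow> F z = F z')"

lemma depends_on_mono: "depends_on A F \<Longrightarrow> A \<subseteq> B \<Longrightarrow> depends_on B F"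
  unfolding depends_on_def by blast

lemma depends_on_comp: "depends_on A F \<Longrightarrow> depends_on A (\<lambda>z. H (F z))"
  unfolding depends_on_def by metis

lemma depends_on_comp2: "depends_on A F \<Longrightarrow> depends_on A G \<Longrightarrow> depends_on A (\<lambda>z. H (F z) (G z))"
  unfolding depends_on_def by metis

lemma measurable_Zs: "i < k \<Longrightarrow> 1 \<le> n \<Longrightarrow> Zs i n \<in> measurable M (count_space UNIV)"
  using indep_Zs unfolding indep_vars_def by auto

lemma depends_on_restrict:
  "depends_on A F \<Longrightarrow> F (jumps \<omega>) = F (\<lambda>i n. restrict (\<lambda>j. case_prod Zs j \<omega>) ({..<k} \<times> A) (i, n))"
  unfolding depends_on_def jumps_def by (auto intro!: arg_cong[where f=F])

lemma measurable_depends_on: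
  assumes "finite A" "A \<subseteq> {1..}" "depends_on A F" "\<And>z. F z \<in> space N"
  shows "(\<lambda>\<omega>. F (jumps \<omega>)) \<in> measurable M N"
proof -
  have "(\<lambda>\<omega>. restrict (\<lambda>j. case_prod Zs j \<omega>) ({..<k} \<times> A))
      \<in> measurable M (PiM ({..<k} \<times> A) (\<lambda>_. count_space UNIV))"
    using assms(2) by (intro measurable_restrict) (auto intro!: measurable_Zs)
  then have "(\<lambda>\<omega>. (\<lambda>r. F (\<lambda>i n. r (i, n))) (restrict (\<lambda>j. case_prod Zs j \<omega>) ({..<k} \<times> A))) \<in> measurable M N"
    by (rule measurable_compose[OF _ measurable_PiM_count_space_nat]) (use assms in auto)
  then show ?thesis using depends_on_restrict[OF assms(3)] by simp
qed

lemma sets_depends_on: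
  assumes "finite A" "A \<subseteq> {1..}" "depends_on A P"
  shows "{\<omega>\<in>space M. P (jumps \<omega>)} \<in> sets M"
proof -
  have "(\<lambda>\<omega>. P (jumps \<omega>)) \<in> measurable M (count_space UNIV)"
    by (rule measurable_depends_on[OF assms]) auto
  then show ?thesis by (simp add: pred_def)
qed

lemma nn_integral_mult_depends_on_disjoint:
  fixes F G :: "(nat \<Rightarrow> nat \<Rightarrow> nat) \<Rightarrow> ennreal"
  assumes A: "finite A" "A \<subseteq> {1..}" and B: "finite B" "B \<subseteq> {1..}" and "A \<inter> B = {}"
    and F: "depends_on A F" and G: "depends_on B G"
  shows "(\<integral>\<^sup>+\<omega>. F (jumps \<omega>) * G (jumps \<omega>) \<partial>M) = (\<integral>\<^sup>+\<omega>. F (jumps \<omega>) \<partial>M) * (\<integral>\<^sup>+\<omega>. G (jumps \<omega>) \<partial>M)"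
proof -
  have borel_eq: "(\<lambda>_::bool. borel) = case_bool borel borel"
    by (auto split: bool.split)
  let ?restr = "\<lambda>C \<omega>. restrict (\<lambda>j. case_prod Zs j \<omega>) ({..<k} \<times> C)"
  let ?F = "\<lambda>r. F (\<lambda>i n. r (i, n))" and ?G = "\<lambda>r. G (\<lambda>i n. r (i, n))"
  have "indep_var (PiM ({..<k} \<times> A) (\<lambda>_. count_space UNIV)) (?restr A)
      (PiM ({..<k} \<times> B) (\<lambda>_. count_space UNIV)) (?restr B)"
    using assms by (intro indep_var_restrict[OF indep_Zs]) auto
  then have "indep_var borel (?F \<circ> ?restr A) borel (?G \<circ> ?restr B)"
    by (rule indep_var_compose) (auto intro!: measurable_PiM_count_space_nat A B)
  then have indep: "indep_vars (\<lambda>_. borel) (case_bool (?F \<circ> ?restr A) (?G \<circ> ?restr B)) UNIV"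
    unfolding borel_eq indep_var_def .
  have "(\<integral>\<^sup>+\<omega>. (\<Prod>b\<in>UNIV. case_bool (?F \<circ> ?restr A) (?G \<circ> ?restr B) b \<omega>) \<partial>M)
      = (\<Prod>b\<in>UNIV. \<integral>\<^sup>+\<omega>. case_bool (?F \<circ> ?restr A) (?G \<circ> ?restr B) b \<omega> \<partial>M)"
    by (rule indep_vars_nn_integral[OF _ indep]) auto
  then show ?thesis
    using depends_on_restrict[OF F] depends_on_restrict[OF G] by (simp add: UNIV_bool mult.commute comp_def)
qed

lemma prob_Zs: "i < k \<Longrightarrow> 1 \<le> n \<Longrightarrow> prob {\<omega>\<in>space M. Zs i n \<omega> \<in> S} = measure p S"
  using measure_distr[OF measurable_Zs, of i n S] distr_Zs[of i n]
  by (simp add: vimage_def Int_def conj_commute)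

lemma AE_positive_jumps: "AE \<omega> in M. \<forall>m. positive_jumps_upto k m (jumps \<omega>)"
proof -
  have "AE \<omega> in M. Zs i n \<omega> \<noteq> 0" if "i < k" "1 \<le> n" for i n
  proof -
    have [measurable]: "Zs i n \<in> measurable M (count_space UNIV)" using that measurable_Zs by auto
    have "prob {\<omega>\<in>space M. Zs i n \<omega> = 0} = 0"
      using prob_Zs[OF that, of "{0}"] zero_notin_pmf by (simp add: measure_pmf_single set_pmf_iff)
    then show ?thesis by (intro AE_I[of _ _ "{\<omega>\<in>space M. Zs i n \<omega> = 0}"]) (auto simp: emeasure_eq_measure)
  qed
  then have "AE \<omega> in M. \<forall>i n. i < k \<longrightarrow> 1 \<le> n \<longrightarrow> Zs i n \<omega> \<noteq> 0"
    by (auto simp: AE_all_countable)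
  then show ?thesis
    by eventually_elim (auto simp: positive_jumps_upto_def jumps_def Suc_le_eq)
qed

lemma depends_on_min_jump: "depends_on {n} (\<lambda>z. min_jump k z n)"
  unfolding depends_on_def using min_jump_cong by blast

definition min_tail :: "nat \<Rightarrow> real" where "min_tail s = measure p {s..} ^ k"

lemma min_tail_nonneg: "0 \<le> min_tail s" unfolding min_tail_def by simp

lemma sets_min_jump_ge: "1 \<le> n \<Longrightarrow> {\<omega>\<in>space M. s \<le> min_jump k (jumps \<omega>) n} \<in> sets M"
  by (rule sets_depends_on[OF _ _ depends_on_comp[OF depends_on_min_jump]]) auto

lemma prob_min_jump_ge:
  assumes n: "1 \<le> n"
  shows "prob {\<omega>\<in>space M. s \<le> min_jump k (jumps \<omega>) n} = min_tail s"
proof -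
  let ?J = "{..<k} \<times> {n}"
  have "{\<omega>\<in>space M. s \<le> min_jump k (jumps \<omega>) n} = (\<Inter>j\<in>?J. case_prod Zs j -` {s..} \<inter> space M)"
    using k_pos by (auto simp: le_min_jump_iff[OF k_pos] jumps_def)
  also have "prob \<dots> = (\<Prod>j\<in>?J. prob (case_prod Zs j -` {s..} \<inter> space M))"
    using n k_pos by (intro indep_varsD[OF indep_Zs]) auto
  also have "\<dots> = (\<Prod>j\<in>?J. measure p {s..})"
    using prob_Zs[of _ n "{s..}"] n by (intro prod.cong) (auto simp: vimage_def Int_def conj_commute)
  also have "\<dots> = min_tail s" unfolding min_tail_def by (simp add: card_cartesian_product)
  finally show ?thesis .
qed

lemma depends_on_walk_points: "depends_on {1..nat n} (\<lambda>z. walk_points k z n)"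
  unfolding depends_on_def by (intro allI impI walk_points_cong) auto

lemma depends_on_walk_jumps_bounded: "depends_on {1..nat n} (\<lambda>z. walk_jumps_bounded k z R n)"
  unfolding depends_on_def
proof (intro allI impI)
  fix z z' :: "nat \<Rightarrow> nat \<Rightarrow> nat" assume agree: "\<forall>i<k. \<forall>y\<in>{1..nat n}. z i y = z' i y"
  then have points: "walk_points k z n = walk_points k z' n" by (intro walk_points_cong) auto
  have "z i (nat x) = z' i (nat x)" if "x \<in> walk_points k z n" "i < k" for x i
    using that agree min_walk_le unfolding walk_points_def by fastforce
  then show "walk_jumps_bounded k z R n = walk_jumps_bounded k z' R n"
    unfolding walk_jumps_bounded_def points by auto
qed

lemma depends_on_walk_weight: "depends_on {1..nat n} (\<lambda>z. walk_weight k z f n)"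
  unfolding walk_weight_def by (rule depends_on_comp[OF depends_on_walk_points])

lemma depends_on_walk_exp_weight: "depends_on {1..nat n} (walk_exp_weight k f R n)"
  unfolding walk_exp_weight_def
  by (rule depends_on_comp2[OF depends_on_walk_jumps_bounded depends_on_walk_weight])

definition shifted_tail :: "nat \<Rightarrow> nat \<Rightarrow> real" where "shifted_tail R y = measure p {y + R<..}"

lemma shifted_tail_nonneg: "0 \<le> shifted_tail R y" unfolding shifted_tail_def by simp

lemma antimono_shifted_tail: "antimono (shifted_tail R)"
proof (rule antimonoI)
  fix x y :: nat assume "x \<le> y"
  then show "shifted_tail R y \<le> shifted_tail R x"
    unfolding shifted_tail_def by (intro measure_pmf.finite_measure_mono) auto
qed

text \<open>The first step of the walk from m, split according to the length s of its jump.\<close>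

definition first_step_factor :: "nat \<Rightarrow> nat \<Rightarrow> nat \<Rightarrow> (nat \<Rightarrow> nat \<Rightarrow> nat) \<Rightarrow> ennreal" where
  "first_step_factor R m s z =
    (if 1 \<le> s \<and> min_jump k z m = s \<and> (\<forall>i<k. z i m \<le> m + R) then ennreal (exp (shifted_tail R m)) else 0)"

lemma depends_on_first_step_factor: "depends_on {m} (first_step_factor R m s)"
  unfolding depends_on_def
proof (intro allI impI)
  fix z z' :: "nat \<Rightarrow> nat \<Rightarrow> nat" assume "\<forall>i<k. \<forall>n\<in>{m}. z i n = z' i n"
  then have agree: "\<And>i. i < k \<Longrightarrow> z i m = z' i m" by simp
  then have "min_jump k z m = min_jump k z' m" by (rule min_jump_cong)
  moreover have "(\<forall>i<k. z i m \<le> m + R) \<longleftrightarrow> (\<forall>i<k. z' i m \<le> m + R)" using agree by simp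
  ultimately show "first_step_factor R m s z = first_step_factor R m s z'"
    unfolding first_step_factor_def by simp
qed

lemma walk_exp_weight_eq_suminf:
  assumes "1 \<le> m" "\<forall>i<k. 1 \<le> z i m"
  shows "walk_exp_weight k (shifted_tail R) R (int m) z =
    (\<Sum>s. first_step_factor R m s z * walk_exp_weight k (shifted_tail R) R (int m - int s) z)"
proof -
  define s0 where "s0 = min_jump k z m"
  have "1 \<le> s0" unfolding s0_def using assms(2) le_min_jump_iff[OF k_pos] by auto
  then have "walk_exp_weight k (shifted_tail R) R (int m) z =
      first_step_factor R m s0 z * walk_exp_weight k (shifted_tail R) R (int m - int s0) z"
    using walk_exp_weight_unfold[OF k_pos, of "int m" z "shifted_tail R" R] assms(1)
    unfolding first_step_factor_def s0_def by (cases "\<forall>i<k. z i m \<le> m + R") (simp_all, blast)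
  also have "\<dots> = (\<Sum>s. first_step_factor R m s z * walk_exp_weight k (shifted_tail R) R (int m - int s) z)"
    by (subst suminf_finite[of "{s0}"]) (auto simp: first_step_factor_def s0_def)
  finally show ?thesis .
qed

text \<open>Since 1 - q \<le> exp(-q), the first step has expectation exp(q) P(Z \<le> m + R) \<le> 1,
  where q = shifted_tail R m.\<close>

lemma suminf_nn_integral_first_step_factor_le_1:
  assumes "1 \<le> m"
  shows "(\<Sum>s. \<integral>\<^sup>+\<omega>. first_step_factor R m s (jumps \<omega>) \<partial>M) \<le> 1"
proof -
  let ?q = "shifted_tail R m" and ?E = "{\<omega>\<in>space M. Zs 0 m \<omega> \<le> m + R}"
  have [measurable]: "Zs 0 m \<in> measurable M (count_space UNIV)" using assms k_pos measurable_Zs by auto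
  have "(\<Sum>s. \<integral>\<^sup>+\<omega>. first_step_factor R m s (jumps \<omega>) \<partial>M)
      = (\<integral>\<^sup>+\<omega>. (\<Sum>s. first_step_factor R m s (jumps \<omega>)) \<partial>M)"
    using assms by (intro nn_integral_suminf[symmetric] measurable_depends_on[OF _ _ depends_on_first_step_factor]) auto
  also have "\<dots> \<le> (\<integral>\<^sup>+\<omega>. ennreal (exp ?q) * indicator ?E \<omega> \<partial>M)"
  proof (intro nn_integral_mono)
    fix \<omega> assume "\<omega> \<in> space M"
    have "(\<Sum>s. first_step_factor R m s (jumps \<omega>)) = first_step_factor R m (min_jump k (jumps \<omega>) m) (jumps \<omega>)"
      by (subst suminf_finite[of "{min_jump k (jumps \<omega>) m}"]) (auto simp: first_step_factor_def)
    also have "\<dots> \<le> ennreal (exp ?q) * indicator ?E \<omega>"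
      using \<open>\<omega> \<in> space M\<close> k_pos unfolding first_step_factor_def by (auto simp: jumps_def)
    finally show "(\<Sum>s. first_step_factor R m s (jumps \<omega>)) \<le> ennreal (exp ?q) * indicator ?E \<omega>" .
  qed
  also have "\<dots> = ennreal (exp ?q) * emeasure M ?E"
    by (intro nn_integral_cmult_indicator) measurable
  also have "emeasure M ?E = ennreal (measure p {..m + R})"
    using prob_Zs[of 0 m "{..m + R}"] k_pos assms by (simp add: emeasure_eq_measure)
  also have "measure p {..m + R} = 1 - ?q"
    using measure_pmf.prob_compl[of "{m + R<..}" p]
    by (simp add: shifted_tail_def Compl_eq_Diff_UNIV[symmetric] not_less atMost_def greaterThan_def
        Collect_neg_eq[symmetric])
  also have "ennreal (exp ?q) * ennreal (1 - ?q) \<le> 1"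
  proof -
    have "exp ?q * (1 - ?q) \<le> exp ?q * exp (- ?q)"
      using exp_ge_add_one_self[of "- ?q"] by (intro mult_left_mono) auto
    then show ?thesis by (simp add: ennreal_mult'[symmetric] ennreal_le_1 exp_minus)
  qed
  finally show ?thesis .
qed

lemma nn_integral_walk_exp_weight_eq_suminf:
  assumes "1 \<le> m"
  shows "(\<integral>\<^sup>+\<omega>. walk_exp_weight k (shifted_tail R) R (int m) (jumps \<omega>) \<partial>M) =
    (\<Sum>s. \<integral>\<^sup>+\<omega>. first_step_factor R m s (jumps \<omega>) *
      walk_exp_weight k (shifted_tail R) R (int m - int s) (jumps \<omega>) \<partial>M)"
proof -
  let ?W = "\<lambda>s z. walk_exp_weight k (shifted_tail R) R (int m - int s) z"
  have "(\<integral>\<^sup>+\<omega>. walk_exp_weight k (shifted_tail R) R (int m) (jumps \<omega>) \<partial>M)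
      = (\<integral>\<^sup>+\<omega>. (\<Sum>s. first_step_factor R m s (jumps \<omega>) * ?W s (jumps \<omega>)) \<partial>M)"
  proof (rule nn_integral_cong_AE)
    show "AE \<omega> in M. walk_exp_weight k (shifted_tail R) R (int m) (jumps \<omega>) =
        (\<Sum>s. first_step_factor R m s (jumps \<omega>) * ?W s (jumps \<omega>))"
      using AE_positive_jumps
    proof eventually_elim
      case (elim \<omega>)
      then have "positive_jumps_upto k m (jumps \<omega>)" by blast
      then have "\<forall>i<k. 1 \<le> jumps \<omega> i m" unfolding positive_jumps_upto_def using assms by blast
      then show ?case by (rule walk_exp_weight_eq_suminf[OF assms])
    qed
  qed
  also have "\<dots> = (\<Sum>s. \<integral>\<^sup>+\<omega>. first_step_factor R m s (jumps \<omega>) * ?W s (jumps \<omega>) \<partial>M)"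
  proof (rule nn_integral_suminf)
    fix s
    have "depends_on {1..m} (first_step_factor R m s)"
      using assms by (intro depends_on_mono[OF depends_on_first_step_factor]) auto
    moreover have "depends_on {1..m} (?W s)"
      by (rule depends_on_mono[OF depends_on_walk_exp_weight]) auto
    ultimately have "depends_on {1..m} (\<lambda>z. first_step_factor R m s z * ?W s z)"
      by (rule depends_on_comp2)
    then show "(\<lambda>\<omega>. first_step_factor R m s (jumps \<omega>) * ?W s (jumps \<omega>)) \<in> borel_measurable M"
      by (intro measurable_depends_on) auto
  qed
  finally show ?thesis .
qed

text \<open>By the previous lemmas, walk_exp_weight is a supermartingale along the walk: the first step
  is independent of the rest of the walk.\<close>

lemma nn_integral_walk_exp_weight_le_1:
  "(\<integral>\<^sup>+\<omega>. walk_exp_weight k (shifted_tail R) R c (jumps \<omega>) \<partial>M) \<le> 1"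
proof (induction "nat c" arbitrary: c rule: less_induct)
  case less
  show ?case
  proof (cases "c \<le> 0")
    case True
    then show ?thesis by (simp add: walk_exp_weight_nonpos emeasure_space_1)
  next
    case False
    define m where "m = nat c"
    have c: "c = int m" "1 \<le> m" using False unfolding m_def by auto
    let ?W = "\<lambda>s z. walk_exp_weight k (shifted_tail R) R (int m - int s) z"
    have "(\<integral>\<^sup>+\<omega>. walk_exp_weight k (shifted_tail R) R c (jumps \<omega>) \<partial>M)
        = (\<Sum>s. \<integral>\<^sup>+\<omega>. first_step_factor R m s (jumps \<omega>) * ?W s (jumps \<omega>) \<partial>M)"
      unfolding c(1) by (rule nn_integral_walk_exp_weight_eq_suminf[OF c(2)])
    also have "\<dots> \<le> (\<Sum>s. \<integral>\<^sup>+\<omega>. first_step_factor R m s (jumps \<omega>) \<partial>M)"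
    proof (intro suminf_le allI)
      fix s
      show "(\<integral>\<^sup>+\<omega>. first_step_factor R m s (jumps \<omega>) * ?W s (jumps \<omega>) \<partial>M)
          \<le> (\<integral>\<^sup>+\<omega>. first_step_factor R m s (jumps \<omega>) \<partial>M)"
      proof (cases "1 \<le> s")
        case True
        have "(\<integral>\<^sup>+\<omega>. first_step_factor R m s (jumps \<omega>) * ?W s (jumps \<omega>) \<partial>M)
            = (\<integral>\<^sup>+\<omega>. first_step_factor R m s (jumps \<omega>) \<partial>M) * (\<integral>\<^sup>+\<omega>. ?W s (jumps \<omega>) \<partial>M)"
          using True c
          by (intro nn_integral_mult_depends_on_disjoint[where A="{m}" and B="{1..m-1}"]
              depends_on_first_step_factor depends_on_mono[OF depends_on_walk_exp_weight]) auto
        also have "\<dots> \<le> (\<integral>\<^sup>+\<omega>. first_step_factor R m s (jumps \<omega>) \<partial>M) * 1"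
          using True c by (intro mult_left_mono less.hyps) auto
        finally show ?thesis by simp
      qed (simp add: first_step_factor_def)
    qed auto
    also have "\<dots> \<le> 1" by (rule suminf_nn_integral_first_step_factor_le_1[OF c(2)])
    finally show ?thesis .
  qed
qed

lemma depends_on_if_min_jumps_agree:
  assumes "\<And>z z'. (\<And>x. x \<in> A \<Longrightarrow> min_jump k z x = min_jump k z' x) \<Longrightarrow> F z = F z'"
  shows "depends_on A F"
  unfolding depends_on_def using assms min_jump_cong by metis

lemma depends_on_exit_above: "depends_on {1..m} (exit_above k Y m)"
  by (rule depends_on_if_min_jumps_agree) (auto simp: exit_above_def)

lemma depends_on_jump_across: "1 \<le> y \<Longrightarrow> depends_on {1..m} (jump_across k G m y)"
  by (rule depends_on_if_min_jumps_agree) (auto simp: jump_across_def)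

lemma depends_on_jump_across_weight: "depends_on {1..m} (jump_across_weight k f G m)"
  unfolding depends_on_def jump_across_weight_def
proof (intro allI impI sum.cong refl)
  fix z z' :: "nat \<Rightarrow> nat \<Rightarrow> nat" and y
  assume "\<forall>i<k. \<forall>n\<in>{1..m}. z i n = z' i n" "y \<in> {1..m}"
  then show "f y * (if jump_across k G m y z then 1 else 0) = f y * (if jump_across k G m y z' then 1 else 0)"
    using depends_on_jump_across[of y m G] unfolding depends_on_def by auto
qed

lemma prob_walk_jumps_bounded_le:
  "prob {\<omega>\<in>space M. walk_jumps_bounded k (jumps \<omega>) R (int m)}
    \<le> prob {\<omega>\<in>space M. walk_weight k (jumps \<omega>) (shifted_tail R) (int m) < T} + exp (- T)"
proof -
  let ?W = "\<lambda>\<omega>. walk_weight k (jumps \<omega>) (shifted_tail R) (int m)"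
  let ?B = "{\<omega>\<in>space M. walk_jumps_bounded k (jumps \<omega>) R (int m)}"
  let ?A = "{\<omega>\<in>space M. ?W \<omega> < T}"
  let ?C = "{\<omega>\<in>space M. walk_jumps_bounded k (jumps \<omega>) R (int m) \<and> T \<le> ?W \<omega>}"
  have "depends_on {1..nat (int m)} (\<lambda>z. (\<lambda>b w. b \<and> T \<le> w)
      (walk_jumps_bounded k z R (int m)) (walk_weight k z (shifted_tail R) (int m)))"
    by (rule depends_on_comp2[OF depends_on_walk_jumps_bounded depends_on_walk_weight])
  then have sets: "?A \<in> sets M" "?C \<in> sets M"
    using sets_depends_on[OF _ _ depends_on_comp[OF depends_on_walk_weight, of "int m"]] sets_depends_on[of "{1..m}"]
    by auto
  have "ennreal (exp T * prob ?C) = (\<integral>\<^sup>+\<omega>. ennreal (exp T) * indicator ?C \<omega> \<partial>M)"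
    using sets by (simp add: emeasure_eq_measure ennreal_mult nn_integral_cmult_indicator)
  also have "\<dots> \<le> (\<integral>\<^sup>+\<omega>. walk_exp_weight k (shifted_tail R) R (int m) (jumps \<omega>) \<partial>M)"
    by (intro nn_integral_mono) (auto simp: indicator_def walk_exp_weight_def)
  also have "\<dots> \<le> 1" by (rule nn_integral_walk_exp_weight_le_1)
  finally have "prob ?C \<le> exp (- T)" by (simp add: ennreal_le_1 exp_minus field_simps)
  have "prob ?B \<le> prob (?A \<union> ?C)" using sets by (intro finite_measure_mono) auto
  also have "\<dots> \<le> prob ?A + prob ?C" using sets by (intro measure_Un_le)
  finally show ?thesis using \<open>prob ?C \<le> exp (- T)\<close> by linarith
qed

lemma depends_on_kchoice_leaves: "depends_on {1..x} (\<lambda>z. kchoice_leaves k z (int x))"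
  unfolding depends_on_def kchoice_leaves_def by (auto intro!: arg_cong2[where f="(\<inter>)"] kchoice_tree_cong)

lemma depends_on_kchoice_Lambda: "depends_on {1..x} (\<lambda>z. kchoice_Lambda k z (int x))"
  unfolding kchoice_Lambda_def by (rule depends_on_comp[OF depends_on_kchoice_leaves])

lemma sets_kchoice_Lambda_less: "{\<omega>\<in>space M. kchoice_Lambda k (jumps \<omega>) (int x) < N} \<in> sets M"
  by (rule sets_depends_on[OF _ _ depends_on_comp[OF depends_on_kchoice_Lambda]]) auto

lemma sets_kchoice_leaves_ge: "{\<omega>\<in>space M. \<forall>l\<in>kchoice_leaves k (jumps \<omega>) (int x). - int R \<le> l} \<in> sets M"
  by (rule sets_depends_on[OF _ _ depends_on_comp[OF depends_on_kchoice_leaves]]) auto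

lemma sets_jump_over_window: "{\<omega>\<in>space M. jump_over_window k a L m (jumps \<omega>)} \<in> sets M"
proof -
  have "depends_on {1..m} (jump_over_window k a L m)"
    by (rule depends_on_if_min_jumps_agree) (auto simp: jump_over_window_def)
  then show ?thesis by (rule sets_depends_on[rotated 2]) auto
qed

lemma sets_large_jump_upto: "{\<omega>\<in>space M. large_jump_upto k R n (jumps \<omega>)} \<in> sets M"
proof -
  have "depends_on {1..n} (large_jump_upto k R n)"
    unfolding depends_on_def large_jump_upto_def by (intro allI impI) (metis atLeastAtMost_iff)
  then show ?thesis by (rule sets_depends_on[rotated 2]) auto
qed

lemma prob_large_jump_upto: "prob {\<omega>\<in>space M. large_jump_upto k R n (jumps \<omega>)} \<le> real (k * n) * measure p {R<..}"
proof -
  have "{\<omega>\<in>space M. large_jump_upto k R n (jumps \<omega>)}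
      = (\<Union>j\<in>{..<k} \<times> {1..n}. Zs (fst j) (snd j) -` {R<..} \<inter> space M)"
    unfolding large_jump_upto_def jumps_def by force
  also have "prob \<dots> \<le> (\<Sum>j\<in>{..<k} \<times> {1..n}. prob (Zs (fst j) (snd j) -` {R<..} \<inter> space M))"
    by (rule measure_UNION_le) (auto intro!: measurable_sets[OF measurable_Zs])
  also have "\<dots> = (\<Sum>j\<in>{..<k} \<times> {1..n}. measure p {R<..})"
  proof (intro sum.cong refl)
    fix j assume "j \<in> {..<k} \<times> {1..n}"
    then show "prob (Zs (fst j) (snd j) -` {R<..} \<inter> space M) = measure p {R<..}"
      using prob_Zs[of "fst j" "snd j" "{R<..}"] by (auto simp: vimage_def Int_def conj_commute)
  qed
  finally show ?thesis by simp
qed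

lemma LIMSEQ_measure_pmf_greaterThan: "(\<lambda>R. measure p {R<..}) \<longlonglongrightarrow> 0"
proof -
  have "(\<lambda>R. measure p {R<..}) \<longlonglongrightarrow> measure p (\<Inter>R. {R<..})"
    by (rule measure_pmf.finite_Lim_measure_decseq) (auto simp: decseq_def)
  moreover have "(\<Inter>R. {(R::nat)<..}) = {}" by auto
  ultimately show ?thesis by simp
qed

end

locale kchoice_heavy_tail = kchoice_model +
  assumes infinite_mean: "(\<integral>\<^sup>+ x. ennreal (real x) \<partial>measure_pmf p) = \<infinity>"
    and finite_min_mean: "(\<integral>\<^sup>+ \<omega>. ennreal (real (Min ((\<lambda>i. Zs i 1 \<omega>) ` {..<k}))) \<partial>M) < \<infinity>"
begin

lemma summable_min_tail: "summable min_tail"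
proof -
  have meas: "(\<lambda>\<omega>. min_jump k (jumps \<omega>) 1) \<in> measurable M (count_space UNIV)"
    by (rule measurable_depends_on[OF _ _ depends_on_min_jump]) auto
  have "(\<Sum>d. ennreal (min_tail (Suc d))) = (\<integral>\<^sup>+ \<omega>. ennreal (real (min_jump k (jumps \<omega>) 1)) \<partial>M)"
    unfolding nn_integral_of_nat_eq_suminf[OF meas]
    using prob_min_jump_ge[of 1] sets_min_jump_ge[of 1] by (simp add: emeasure_eq_measure)
  also have "\<dots> < \<infinity>" using finite_min_mean unfolding min_jump_def jumps_def by simp
  finally have "summable (\<lambda>d. min_tail (Suc d))"
    by (intro summable_suminf_not_top min_tail_nonneg) auto
  then show ?thesis using summable_Suc_iff by blast
qed

lemma min_tail_tail_nonneg: "0 \<le> (\<Sum>j. min_tail (j + G))"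
  using summable_min_tail min_tail_nonneg by (intro suminf_nonneg summable_ignore_initial_segment) auto

lemma min_tail_tail_small: "0 < e \<Longrightarrow> \<exists>G0. \<forall>G\<ge>G0. (\<Sum>j. min_tail (j + G)) < e"
  using suminf_exist_split[OF _ summable_min_tail] min_tail_tail_nonneg by fastforce

lemma not_summable_measure_pmf_greaterThan: "\<not> summable (\<lambda>d. measure p {d<..})"
proof
  assume "summable (\<lambda>d. measure p {d<..})"
  have "(\<integral>\<^sup>+ x. ennreal (real x) \<partial>measure_pmf p) = (\<Sum>d. ennreal (measure p {d<..}))"
    by (subst nn_integral_of_nat_eq_suminf)
       (auto simp: measure_pmf.emeasure_eq_measure greaterThan_def Suc_le_eq)
  also have "\<dots> = ennreal (\<Sum>d. measure p {d<..})"
    using \<open>summable (\<lambda>d. measure p {d<..})\<close> by (intro suminf_ennreal2) auto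
  finally show False using infinite_mean by simp
qed

lemma filterlim_sum_shifted_tail: "filterlim (\<lambda>m. \<Sum>y\<in>{1..m}. shifted_tail R y) at_top sequentially"
proof -
  let ?g = "\<lambda>d. measure p {d<..}"
  show ?thesis unfolding filterlim_at_top eventually_sequentially
  proof
    fix B :: real
    have "\<exists>n. B + (\<Sum>d<R+1. ?g d) < (\<Sum>d<n. ?g d)"
    proof (rule ccontr)
      assume "\<not> ?thesis"
      then have "summable ?g"
        by (intro summableI_nonneg_bounded[where x="B + (\<Sum>d<R+1. ?g d)"]) (auto simp: not_less)
      then show False using not_summable_measure_pmf_greaterThan by simp
    qed
    then obtain n where n: "B + (\<Sum>d<R+1. ?g d) < (\<Sum>d<n. ?g d)" by blast
    have "B \<le> (\<Sum>y\<in>{1..m}. shifted_tail R y)" if "n \<le> m" for m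
    proof -
      have "(\<Sum>y\<in>{1..m}. shifted_tail R y) = (\<Sum>d\<in>{R+1..m+R}. ?g d)"
        unfolding shifted_tail_def by (subst sum.shift_bounds_cl_nat_ivl[symmetric]) (simp add: add.commute)
      also have "\<dots> = (\<Sum>d<m+R+1. ?g d) - (\<Sum>d<R+1. ?g d)"
      proof -
        have "(\<Sum>d<m+R+1. ?g d) = (\<Sum>d\<in>{..<R+1} \<union> {R+1..m+R}. ?g d)"
          by (rule sum.cong) auto
        also have "\<dots> = (\<Sum>d<R+1. ?g d) + (\<Sum>d\<in>{R+1..m+R}. ?g d)"
          by (rule sum.union_disjoint) auto
        finally show ?thesis by linarith
      qed
      moreover have "(\<Sum>d<n. ?g d) \<le> (\<Sum>d<m+R+1. ?g d)" using that by (intro sum_mono2) auto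
      ultimately show ?thesis using n by linarith
    qed
    then show "\<exists>N. \<forall>m\<ge>N. B \<le> (\<Sum>y\<in>{1..m}. shifted_tail R y)" by blast
  qed
qed

lemma prob_exit_above: "prob {\<omega>\<in>space M. exit_above k Y m (jumps \<omega>)} \<le> (\<Sum>j. min_tail (j + Suc Y))"
proof -
  have "{\<omega>\<in>space M. exit_above k Y m (jumps \<omega>)} = (\<Union>x\<in>{Y<..m}. {\<omega>\<in>space M. x \<le> min_jump k (jumps \<omega>) x})"
    unfolding exit_above_def by auto
  also have "prob \<dots> \<le> (\<Sum>x\<in>{Y<..m}. prob {\<omega>\<in>space M. x \<le> min_jump k (jumps \<omega>) x})"
    by (rule measure_UNION_le) (auto intro: sets_min_jump_ge)
  also have "\<dots> = (\<Sum>x\<in>{Y<..m}. min_tail x)" by (intro sum.cong refl prob_min_jump_ge) auto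
  also have "\<dots> \<le> (\<Sum>j. min_tail (j + Suc Y))"
    by (intro sum_le_suminf_shift summable_min_tail min_tail_nonneg) auto
  finally show ?thesis .
qed

lemma prob_jump_across:
  assumes "1 \<le> y"
  shows "prob {\<omega>\<in>space M. jump_across k G m y (jumps \<omega>)} \<le> (\<Sum>j. min_tail (j + G))"
proof -
  have "{\<omega>\<in>space M. jump_across k G m y (jumps \<omega>)}
      = (\<Union>x\<in>{y..m}. {\<omega>\<in>space M. x - y + G \<le> min_jump k (jumps \<omega>) x})"
    unfolding jump_across_def by auto
  also have "prob \<dots> \<le> (\<Sum>x\<in>{y..m}. prob {\<omega>\<in>space M. x - y + G \<le> min_jump k (jumps \<omega>) x})"
    using assms by (intro measure_UNION_le) (auto intro: sets_min_jump_ge)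
  also have "\<dots> = (\<Sum>x\<in>{y..m}. min_tail (x - y + G))"
    using assms by (intro sum.cong refl prob_min_jump_ge) auto
  also have "\<dots> = (\<Sum>j\<in>(\<lambda>x. x - y) ` {y..m}. min_tail (j + G))"
    by (subst sum.reindex) (auto simp: inj_on_def)
  also have "\<dots> \<le> (\<Sum>j. min_tail (j + G))"
    using summable_min_tail min_tail_nonneg by (intro sum_le_suminf summable_ignore_initial_segment) auto
  finally show ?thesis .
qed

lemma nn_integral_jump_across_weight_le:
  "(\<integral>\<^sup>+\<omega>. jump_across_weight k (shifted_tail R) G m (jumps \<omega>) \<partial>M)
    \<le> ennreal ((\<Sum>y\<in>{1..m}. shifted_tail R y) * (\<Sum>j. min_tail (j + G)))"
proof -
  let ?t = "\<Sum>j. min_tail (j + G)" and ?J = "\<lambda>y. {\<omega>\<in>space M. jump_across k G m y (jumps \<omega>)}"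
  have sets_J [measurable]: "?J y \<in> sets M" if "y \<in> {1..m}" for y
    using that by (intro sets_depends_on[OF _ _ depends_on_jump_across]) auto
  have "(\<integral>\<^sup>+\<omega>. jump_across_weight k (shifted_tail R) G m (jumps \<omega>) \<partial>M)
      = (\<integral>\<^sup>+\<omega>. (\<Sum>y\<in>{1..m}. ennreal (shifted_tail R y) * indicator (?J y) \<omega>) \<partial>M)"
  proof (intro nn_integral_cong)
    fix \<omega> assume "\<omega> \<in> space M"
    have "ennreal (jump_across_weight k (shifted_tail R) G m (jumps \<omega>))
        = (\<Sum>y\<in>{1..m}. ennreal (shifted_tail R y * (if jump_across k G m y (jumps \<omega>) then 1 else 0)))"
      unfolding jump_across_weight_def by (rule sum_ennreal[symmetric]) (simp add: shifted_tail_nonneg)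
    also have "\<dots> = (\<Sum>y\<in>{1..m}. ennreal (shifted_tail R y) * indicator (?J y) \<omega>)"
      using \<open>\<omega> \<in> space M\<close> by (intro sum.cong refl) (simp add: indicator_def)
    finally show "ennreal (jump_across_weight k (shifted_tail R) G m (jumps \<omega>))
        = (\<Sum>y\<in>{1..m}. ennreal (shifted_tail R y) * indicator (?J y) \<omega>)" .
  qed
  also have "\<dots> = (\<Sum>y\<in>{1..m}. ennreal (shifted_tail R y) * emeasure M (?J y))"
    by (subst nn_integral_sum) (auto intro!: sum.cong nn_integral_cmult_indicator)
  also have "\<dots> \<le> (\<Sum>y\<in>{1..m}. ennreal (shifted_tail R y) * ennreal ?t)"
    using prob_jump_across
    by (intro sum_mono mult_left_mono) (auto simp: emeasure_eq_measure intro!: ennreal_leI)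
  also have "\<dots> = ennreal ((\<Sum>y\<in>{1..m}. shifted_tail R y) * ?t)"
    using min_tail_tail_nonneg shifted_tail_nonneg
    by (simp add: ennreal_mult[symmetric] sum_ennreal sum_distrib_right sum_nonneg)
  finally show ?thesis .
qed

lemma prob_jump_across_weight_ge:
  assumes pos: "0 < (\<Sum>y\<in>{1..m}. shifted_tail R y)" (is "0 < ?S")
  shows "prob {\<omega>\<in>space M. ?S / 2 \<le> jump_across_weight k (shifted_tail R) G m (jumps \<omega>)}
    \<le> 2 * (\<Sum>j. min_tail (j + G))"
proof -
  let ?t = "\<Sum>j. min_tail (j + G)"
  let ?A = "{\<omega>\<in>space M. ?S / 2 \<le> jump_across_weight k (shifted_tail R) G m (jumps \<omega>)}"
  have [measurable]: "?A \<in> sets M"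
    by (rule sets_depends_on[OF _ _ depends_on_comp[OF depends_on_jump_across_weight]]) auto
  have "ennreal (?S / 2 * prob ?A) = ennreal (?S / 2) * emeasure M ?A"
    using pos by (subst ennreal_mult) (auto simp: emeasure_eq_measure)
  also have "\<dots> = (\<integral>\<^sup>+\<omega>. ennreal (?S / 2) * indicator ?A \<omega> \<partial>M)"
    by (rule nn_integral_cmult_indicator[symmetric]) measurable
  also have "\<dots> \<le> (\<integral>\<^sup>+\<omega>. jump_across_weight k (shifted_tail R) G m (jumps \<omega>) \<partial>M)"
    by (intro nn_integral_mono) (auto simp: indicator_def intro!: ennreal_leI)
  also have "\<dots> \<le> ennreal (?S * ?t)" by (rule nn_integral_jump_across_weight_le)
  finally have "?S / 2 * prob ?A \<le> ?S * ?t"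
    using pos min_tail_tail_nonneg by (subst (asm) ennreal_le_iff) auto
  then show ?thesis using pos by (simp add: field_simps)
qed

text \<open>By sum_le_walk_weight, a small walk weight on [1, m] forces an early exit, or jumps across
  blocks carrying half of the (unbounded) total weight; both are unlikely.\<close>

lemma prob_walk_weight_less_le:
  assumes "1 \<le> G"
    and big: "2 * ((\<Sum>y\<in>{1..Y}. shifted_tail R y) + real G * max T 0) < (\<Sum>y\<in>{1..m}. shifted_tail R y)"
  shows "prob {\<omega>\<in>space M. walk_weight k (jumps \<omega>) (shifted_tail R) (int m) < T}
    \<le> (\<Sum>j. min_tail (j + Suc Y)) + 2 * (\<Sum>j. min_tail (j + G))"
proof -
  let ?S = "\<Sum>y\<in>{1..m}. shifted_tail R y"
  let ?E = "{\<omega>\<in>space M. exit_above k Y m (jumps \<omega>)}"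
  let ?A = "{\<omega>\<in>space M. ?S / 2 \<le> jump_across_weight k (shifted_tail R) G m (jumps \<omega>)}"
  have sets: "?E \<in> sets M" "?A \<in> sets M"
    by (rule sets_depends_on[OF _ _ depends_on_exit_above], simp, force)
       (rule sets_depends_on[OF _ _ depends_on_comp[OF depends_on_jump_across_weight]], simp, force)
  have "0 \<le> (\<Sum>y\<in>{1..Y}. shifted_tail R y) + real G * max T 0"
    by (intro add_nonneg_nonneg sum_nonneg shifted_tail_nonneg mult_nonneg_nonneg) auto
  then have "0 < ?S" using big by (meson le_less_trans mult_nonneg_nonneg zero_le_numeral)
  have "prob {\<omega>\<in>space M. walk_weight k (jumps \<omega>) (shifted_tail R) (int m) < T} \<le> prob (?E \<union> ?A)"
  proof (rule measure_le_if_AE_imp[OF AE_positive_jumps])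
    fix \<omega> assume "\<omega> \<in> space M" and small: "walk_weight k (jumps \<omega>) (shifted_tail R) (int m) < T"
      and "\<forall>m. positive_jumps_upto k m (jumps \<omega>)"
    show "\<omega> \<in> ?E \<union> ?A"
    proof (rule ccontr)
      assume "\<omega> \<notin> ?E \<union> ?A"
      then have "\<not> exit_above k Y m (jumps \<omega>)"
        and "jump_across_weight k (shifted_tail R) G m (jumps \<omega>) < ?S / 2"
        using \<open>\<omega> \<in> space M\<close> by auto
      moreover have "real G * walk_weight k (jumps \<omega>) (shifted_tail R) (int m) \<le> real G * max T 0"
        using small by (intro mult_left_mono) auto
      moreover have "?S \<le> (\<Sum>y\<in>{1..Y}. shifted_tail R y) + real G * walk_weight k (jumps \<omega>) (shifted_tail R) (int m)
          + jump_across_weight k (shifted_tail R) G m (jumps \<omega>)"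
        using \<open>\<forall>m. positive_jumps_upto k m (jumps \<omega>)\<close> \<open>\<not> exit_above k Y m (jumps \<omega>)\<close>
        by (intro sum_le_walk_weight[OF k_pos antimono_shifted_tail shifted_tail_nonneg]) auto
      ultimately show False using big by argo
    qed
  qed (use sets in auto)
  also have "\<dots> \<le> prob ?E + prob ?A" using sets by (rule measure_Un_le)
  also have "\<dots> \<le> (\<Sum>j. min_tail (j + Suc Y)) + 2 * (\<Sum>j. min_tail (j + G))"
    using prob_exit_above prob_jump_across_weight_ge[OF \<open>0 < ?S\<close>] by (rule add_mono)
  finally show ?thesis .
qed

lemma LIMSEQ_prob_walk_weight_less:
  "(\<lambda>m. prob {\<omega>\<in>space M. walk_weight k (jumps \<omega>) (shifted_tail R) (int m) < T}) \<longlonglongrightarrow> 0"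
proof (rule LIMSEQ_0_if_eventually_le)
  fix e :: real assume "0 < e"
  obtain G0 where G0: "\<forall>G\<ge>G0. (\<Sum>j. min_tail (j + G)) < e / 4"
    using min_tail_tail_small[of "e / 4"] \<open>0 < e\<close> by auto
  define G where "G = max G0 1"
  obtain Y where Y: "\<forall>Y'\<ge>Y. (\<Sum>j. min_tail (j + Y')) < e / 2"
    using min_tail_tail_small[of "e / 2"] \<open>0 < e\<close> by auto
  obtain m0 where m0: "\<forall>m\<ge>m0. 2 * ((\<Sum>y\<in>{1..Y}. shifted_tail R y) + real G * max T 0) + 1
      \<le> (\<Sum>y\<in>{1..m}. shifted_tail R y)"
    using filterlim_sum_shifted_tail[of R] unfolding filterlim_at_top eventually_sequentially by blast
  have "prob {\<omega>\<in>space M. walk_weight k (jumps \<omega>) (shifted_tail R) (int m) < T} \<le> e" if "m0 \<le> m" for m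
  proof -
    have "prob {\<omega>\<in>space M. walk_weight k (jumps \<omega>) (shifted_tail R) (int m) < T}
        \<le> (\<Sum>j. min_tail (j + Suc Y)) + 2 * (\<Sum>j. min_tail (j + G))"
      using m0 that unfolding G_def by (intro prob_walk_weight_less_le) auto
    also have "\<dots> \<le> e" using Y[rule_format, of "Suc Y"] G0[rule_format, of G] unfolding G_def by auto
    finally show ?thesis .
  qed
  then show "\<exists>m0. \<forall>m\<ge>m0. prob {\<omega>\<in>space M. walk_weight k (jumps \<omega>) (shifted_tail R) (int m) < T} \<le> e"
    by blast
qed auto

lemma LIMSEQ_prob_walk_jumps_bounded:
  "(\<lambda>m. prob {\<omega>\<in>space M. walk_jumps_bounded k (jumps \<omega>) R (int m)}) \<longlonglongrightarrow> 0"
proof (rule LIMSEQ_0_if_eventually_le)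
  fix e :: real assume "0 < e"
  define T where "T = - ln (e / 2)"
  have "exp (- T) = e / 2" unfolding T_def using \<open>0 < e\<close> by simp
  obtain m0 where m0: "\<And>m. m0 \<le> m \<Longrightarrow>
      prob {\<omega>\<in>space M. walk_weight k (jumps \<omega>) (shifted_tail R) (int m) < T} < e / 2"
    using LIMSEQ_prob_walk_weight_less[THEN order_tendstoD(2), of "e / 2" R T] \<open>0 < e\<close>
    unfolding eventually_sequentially by auto
  have "prob {\<omega>\<in>space M. walk_jumps_bounded k (jumps \<omega>) R (int m)} \<le> e" if "m0 \<le> m" for m
    using prob_walk_jumps_bounded_le[of R m T] m0[OF that] \<open>exp (- T) = e / 2\<close> by linarith
  then show "\<exists>m0. \<forall>m\<ge>m0. prob {\<omega>\<in>space M. walk_jumps_bounded k (jumps \<omega>) R (int m)} \<le> e"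
    by blast
qed auto

lemma LIMSEQ_prob_leaves_ge:
  "(\<lambda>m. prob {\<omega>\<in>space M. \<forall>l\<in>kchoice_leaves k (jumps \<omega>) (int m). - int R \<le> l}) \<longlonglongrightarrow> 0"
proof -
  have "prob {\<omega>\<in>space M. \<forall>l\<in>kchoice_leaves k (jumps \<omega>) (int m). - int R \<le> l}
      \<le> prob {\<omega>\<in>space M. walk_jumps_bounded k (jumps \<omega>) R (int m)}" for m
    using walk_jumps_bounded_if_leaves_ge[OF k_pos]
    by (intro finite_measure_mono sets_depends_on[OF _ _ depends_on_walk_jumps_bounded]) auto
  then show ?thesis
    by (intro tendsto_sandwich[OF _ _ tendsto_const LIMSEQ_prob_walk_jumps_bounded[of R]]) auto
qed

lemma prob_jump_over_window:
  "prob {\<omega>\<in>space M. jump_over_window k a L m (jumps \<omega>)} \<le> (\<Sum>j. min_tail (j + (L + 2)))"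
proof -
  have "{\<omega>\<in>space M. jump_over_window k a L m (jumps \<omega>)}
      = (\<Union>y\<in>{a+L<..m}. {\<omega>\<in>space M. y - a + 1 \<le> min_jump k (jumps \<omega>) y})"
    unfolding jump_over_window_def by auto
  also have "prob \<dots> \<le> (\<Sum>y\<in>{a+L<..m}. prob {\<omega>\<in>space M. y - a + 1 \<le> min_jump k (jumps \<omega>) y})"
    by (rule measure_UNION_le) (auto intro: sets_min_jump_ge)
  also have "\<dots> = (\<Sum>y\<in>{a+L<..m}. min_tail (y - a + 1))" by (intro sum.cong refl prob_min_jump_ge) auto
  also have "\<dots> = (\<Sum>j\<in>(\<lambda>y. y - a + 1) ` {a+L<..m}. min_tail j)"
  proof (rule sum.reindex[symmetric, unfolded comp_def])
    show "inj_on (\<lambda>y. y - a + 1) {a + L<..m}" by (rule inj_onI) auto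
  qed
  also have "\<dots> \<le> (\<Sum>j. min_tail (j + (L + 2)))"
    by (rule sum_le_suminf_shift[OF summable_min_tail min_tail_nonneg]) auto
  finally show ?thesis .
qed

lemma prob_jump_over_window_ever:
  "prob (\<Union>m. {\<omega>\<in>space M. jump_over_window k a L m (jumps \<omega>)}) \<le> (\<Sum>j. min_tail (j + (L + 2)))"
proof (rule LIMSEQ_le_const2)
  have "incseq (\<lambda>m. {\<omega>\<in>space M. jump_over_window k a L m (jumps \<omega>)})"
    unfolding incseq_def jump_over_window_def by (auto intro: order_trans)
  then show "(\<lambda>m. prob {\<omega>\<in>space M. jump_over_window k a L m (jumps \<omega>)})
      \<longlonglongrightarrow> prob (\<Union>m. {\<omega>\<in>space M. jump_over_window k a L m (jumps \<omega>)})"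
    using sets_jump_over_window by (intro finite_Lim_measure_incseq) auto
qed (use prob_jump_over_window in auto)

lemma prob_kchoice_Lambda_less_Suc_le:
  assumes "1 \<le> a" "a \<le> x"
  shows "prob {\<omega>\<in>space M. kchoice_Lambda k (jumps \<omega>) (int x) < Suc N}
    \<le> prob {\<omega>\<in>space M. jump_over_window k a L x (jumps \<omega>)}
      + (\<Sum>y\<in>{a..a+L}. prob {\<omega>\<in>space M. kchoice_Lambda k (jumps \<omega>) (int y) < N})
      + prob {\<omega>\<in>space M. large_jump_upto k R (a + L) (jumps \<omega>)}
      + prob {\<omega>\<in>space M. \<forall>l\<in>kchoice_leaves k (jumps \<omega>) (int x). - int R \<le> l}"
proof -
  let ?J = "{\<omega>\<in>space M. jump_over_window k a L x (jumps \<omega>)}"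
  let ?U = "\<Union>y\<in>{a..a+L}. {\<omega>\<in>space M. kchoice_Lambda k (jumps \<omega>) (int y) < N}"
  let ?B = "{\<omega>\<in>space M. large_jump_upto k R (a + L) (jumps \<omega>)}"
  let ?E = "{\<omega>\<in>space M. \<forall>l\<in>kchoice_leaves k (jumps \<omega>) (int x). - int R \<le> l}"
  have sets: "?J \<in> sets M" "?U \<in> sets M" "?B \<in> sets M" "?E \<in> sets M"
    using sets_jump_over_window sets_kchoice_Lambda_less sets_large_jump_upto sets_kchoice_leaves_ge by auto
  have "prob {\<omega>\<in>space M. kchoice_Lambda k (jumps \<omega>) (int x) < Suc N} \<le> prob (?J \<union> ?U \<union> ?B \<union> ?E)"
  proof (rule measure_le_if_AE_imp[OF AE_positive_jumps])
    fix \<omega> assume "\<omega> \<in> space M" and less: "kchoice_Lambda k (jumps \<omega>) (int x) < Suc N"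
      and pos: "\<forall>m. positive_jumps_upto k m (jumps \<omega>)"
    show "\<omega> \<in> ?J \<union> ?U \<union> ?B \<union> ?E"
    proof (rule ccontr)
      assume "\<omega> \<notin> ?J \<union> ?U \<union> ?B \<union> ?E"
      then have "\<not> jump_over_window k a L x (jumps \<omega>)"
        and "\<forall>y\<in>{a..a+L}. N \<le> kchoice_Lambda k (jumps \<omega>) (int y)"
        and "\<not> large_jump_upto k R (a + L) (jumps \<omega>)"
        and "\<exists>l\<in>kchoice_leaves k (jumps \<omega>) (int x). l < - int R"
        using \<open>\<omega> \<in> space M\<close> by (auto simp: not_less not_le)
      then have "Suc N \<le> kchoice_Lambda k (jumps \<omega>) (int x)"
        using Suc_le_kchoice_Lambda[OF k_pos assms] pos by blast
      then show False using less by simp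
    qed
  qed (use sets in auto)
  also have "\<dots> \<le> prob (?J \<union> ?U \<union> ?B) + prob ?E" using sets by (intro measure_Un_le) auto
  also have "prob (?J \<union> ?U \<union> ?B) \<le> prob (?J \<union> ?U) + prob ?B" using sets by (intro measure_Un_le) auto
  also have "prob (?J \<union> ?U) \<le> prob ?J + prob ?U" using sets by (intro measure_Un_le) auto
  also have "prob ?U \<le> (\<Sum>y\<in>{a..a+L}. prob {\<omega>\<in>space M. kchoice_Lambda k (jumps \<omega>) (int y) < N})"
    using sets_kchoice_Lambda_less by (intro measure_UNION_le) auto
  finally show ?thesis by simp
qed

lemma obtain_small_window:
  assumes "(\<lambda>x. prob {\<omega>\<in>space M. kchoice_Lambda k (jumps \<omega>) (int x) < N}) \<longlonglongrightarrow> 0" "0 < e"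
  obtains a L where "1 \<le> a" "(\<Sum>j. min_tail (j + (L + 2))) < e"
    "(\<Sum>y\<in>{a..a+L}. prob {\<omega>\<in>space M. kchoice_Lambda k (jumps \<omega>) (int y) < N}) \<le> e"
proof -
  obtain L where "\<forall>G\<ge>L. (\<Sum>j. min_tail (j + G)) < e"
    using min_tail_tail_small assms(2) by auto
  then have L: "(\<Sum>j. min_tail (j + (L + 2))) < e" using le_add1 by blast
  have "0 < e / (L + 1)" using assms(2) by simp
  then obtain a0 where a0: "\<And>y. a0 \<le> y \<Longrightarrow>
      prob {\<omega>\<in>space M. kchoice_Lambda k (jumps \<omega>) (int y) < N} < e / (L + 1)"
    using assms(1)[THEN order_tendstoD(2)] unfolding eventually_sequentially by blast
  have "(\<Sum>y\<in>{max a0 1..max a0 1+L}. prob {\<omega>\<in>space M. kchoice_Lambda k (jumps \<omega>) (int y) < N})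
      \<le> (\<Sum>y\<in>{max a0 1..max a0 1+L}. e / (L + 1))"
    using a0 by (intro sum_mono less_imp_le) auto
  also have "\<dots> = e" by (simp add: field_simps)
  finally show ?thesis using L by (intro that[of "max a0 1" L]) auto
qed

lemma LIMSEQ_prob_kchoice_Lambda_less:
  "(\<lambda>x. prob {\<omega>\<in>space M. kchoice_Lambda k (jumps \<omega>) (int x) < N}) \<longlonglongrightarrow> 0"
proof (induction N)
  case (Suc N)
  show ?case
  proof (rule LIMSEQ_0_if_eventually_le)
    fix e :: real assume "0 < e"
    then obtain a L where a: "1 \<le> a" and L: "(\<Sum>j. min_tail (j + (L + 2))) < e / 4"
      and window: "(\<Sum>y\<in>{a..a+L}. prob {\<omega>\<in>space M. kchoice_Lambda k (jumps \<omega>) (int y) < N}) \<le> e / 4"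
      using obtain_small_window[OF Suc.IH, of "e / 4"] by auto
    have "(\<lambda>R. real (k * (a + L)) * measure p {R<..}) \<longlonglongrightarrow> 0"
      using tendsto_mult_right_zero[OF LIMSEQ_measure_pmf_greaterThan] by simp
    then obtain R where R: "real (k * (a + L)) * measure p {R<..} < e / 4"
      using \<open>0 < e\<close> by (metis (no_types, lifting) eventually_sequentially order_refl order_tendstoD(2)
          zero_less_divide_iff zero_less_numeral)
    obtain x0 where x0: "\<And>x. x0 \<le> x \<Longrightarrow>
        prob {\<omega>\<in>space M. \<forall>l\<in>kchoice_leaves k (jumps \<omega>) (int x). - int R \<le> l} < e / 4"
      using LIMSEQ_prob_leaves_ge[of R, THEN order_tendstoD(2), of "e / 4"] \<open>0 < e\<close>
      unfolding eventually_sequentially by auto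
    have "prob {\<omega>\<in>space M. kchoice_Lambda k (jumps \<omega>) (int x) < Suc N} \<le> e" if "max a x0 \<le> x" for x
    proof -
      have "a \<le> x" "x0 \<le> x" using that by auto
      then show ?thesis
        using prob_kchoice_Lambda_less_Suc_le[OF a, where x=x and L=L and N=N and R=R] window
          prob_jump_over_window[of a L x] L prob_large_jump_upto[of R "a + L"] R x0[of x]
        by linarith
    qed
    then show "\<exists>x0. \<forall>x\<ge>x0. prob {\<omega>\<in>space M. kchoice_Lambda k (jumps \<omega>) (int x) < Suc N} \<le> e"
      by blast
  qed auto
qed simp

lemma AE_eventually_kchoice_Lambda_ge:
  "AE \<omega> in M. \<forall>\<^sub>F n in sequentially. N \<le> kchoice_Lambda k (jumps \<omega>) (int n)"
proof (rule AE_if_small_exceptional_sets[OF AE_positive_jumps])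
  fix e :: real assume "0 < e"
  then obtain a L where a: "1 \<le> a" and L: "(\<Sum>j. min_tail (j + (L + 2))) < e / 2"
    and window: "(\<Sum>y\<in>{a..a+L}. prob {\<omega>\<in>space M. kchoice_Lambda k (jumps \<omega>) (int y) < N}) \<le> e / 2"
    using obtain_small_window[OF LIMSEQ_prob_kchoice_Lambda_less, of "e / 2"] by auto
  let ?J = "\<Union>m. {\<omega>\<in>space M. jump_over_window k a L m (jumps \<omega>)}"
  let ?U = "\<Union>y\<in>{a..a+L}. {\<omega>\<in>space M. kchoice_Lambda k (jumps \<omega>) (int y) < N}"
  have sets: "?J \<in> sets M" "?U \<in> sets M" using sets_jump_over_window sets_kchoice_Lambda_less by auto
  have "prob (?J \<union> ?U) \<le> prob ?J + prob ?U" using sets by (rule measure_Un_le)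
  also have "prob ?J \<le> (\<Sum>j. min_tail (j + (L + 2)))" by (rule prob_jump_over_window_ever)
  also have "prob ?U \<le> (\<Sum>y\<in>{a..a+L}. prob {\<omega>\<in>space M. kchoice_Lambda k (jumps \<omega>) (int y) < N})"
    using sets_kchoice_Lambda_less by (intro measure_UNION_le) auto
  finally have "prob (?J \<union> ?U) \<le> e" using L window by linarith
  moreover have "\<forall>\<^sub>F n in sequentially. N \<le> kchoice_Lambda k (jumps \<omega>) (int n)"
    if "\<omega> \<in> space M" "\<forall>m. positive_jumps_upto k m (jumps \<omega>)" "\<omega> \<notin> ?J \<union> ?U" for \<omega>
  proof -
    have "\<forall>x\<in>{a..a+L}. N \<le> kchoice_Lambda k (jumps \<omega>) (int x)" using that(1,3) by (auto simp: not_less)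
    moreover have "\<not> jump_over_window k a L n (jumps \<omega>)" for n using that(1,3) by blast
    ultimately have "N \<le> kchoice_Lambda k (jumps \<omega>) (int n)" if "a \<le> n" for n
      using kchoice_Lambda_ge_beyond_window[OF k_pos a that] \<open>\<forall>m. positive_jumps_upto k m (jumps \<omega>)\<close>
      by blast
    then show ?thesis unfolding eventually_sequentially by blast
  qed
  ultimately show "\<exists>B\<in>sets M. prob B \<le> e \<and> (\<forall>\<omega>\<in>space M. (\<forall>m. positive_jumps_upto k m (jumps \<omega>)) \<longrightarrow>
      \<omega> \<notin> B \<longrightarrow> (\<forall>\<^sub>F n in sequentially. N \<le> kchoice_Lambda k (jumps \<omega>) (int n)))"
    using sets by blast
qed

lemma AE_filterlim_kchoice_Lambda:
  "AE \<omega> in M. filterlim (\<lambda>n. kchoice_Lambda k (jumps \<omega>) (int n)) at_top sequentially"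
  using AE_eventually_kchoice_Lambda_ge unfolding filterlim_at_top by (simp add: AE_all_countable)

end

theorem mainTheorem13:
  fixes M :: "'a measure" and p :: "nat pmf" and k :: nat
    and Zs :: "nat \<Rightarrow> nat \<Rightarrow> 'a \<Rightarrow> nat"
  assumes "prob_space M"
    and "k \<ge> 2"
    and support_pos: "0 \<notin> set_pmf p"
    and aperiodic: "Gcd (set_pmf p) = 1"
    and indep: "prob_space.indep_vars M (\<lambda>_. count_space UNIV) (\<lambda>(i, n). Zs i n) ({..<k} \<times> {1..})"
    and distr: "\<And>i n. i < k \<Longrightarrow> n \<ge> 1 \<Longrightarrow> distr M (count_space UNIV) (Zs i n) = measure_pmf p"
    and infinite_mean: "(\<integral>\<^sup>+ x. ennreal (real x) \<partial>measure_pmf p) = \<infinity>"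
    and finite_min_mean: "(\<integral>\<^sup>+ \<omega>. ennreal (real (Min ((\<lambda>i. Zs i 1 \<omega>) ` {..<k}))) \<partial>M) < \<infinity>"
  shows "AE \<omega> in M. filterlim (\<lambda>n::nat. kchoice_Lambda k (\<lambda>i m. Zs i m \<omega>) (int n)) at_top sequentially"
proof -
  interpret kchoice_heavy_tail M k p Zs
    using assms by (simp add: kchoice_heavy_tail_def kchoice_model_def kchoice_model_axioms_def
        kchoice_heavy_tail_axioms_def)
  show ?thesis using AE_filterlim_kchoice_Lambda by (simp add: jumps_def)
qed

end
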